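(* For all category presentations $C$ and $D$, the functor $[\![-]\!]:\mathbf{UnCurr}_\approx(C,D)\to\mathbf{Prof}([\![C]\!],[\![D]\!])$ induced by the semantics of uncurried profunctor presentations is an equivalence of categories.
   Context: Category presentations: a category presentation $C$ consists of sorts, function symbols $f:c\to c'$ between sorts, and a set $C_E$ of equations between parallel paths (a path is a composable finite list $f_0.\cdots.f_{n-1}$ of function symbols, or an empty path $1_c$; concatenation is written with a dot). Provable equality $\approx_C$ is the smallest equivalence relation on paths containing $C_E$ and closed under pre- and post-concatenation with composable function symbols; $[\![C]\!]$ is the category with objects the sorts and morphisms the $\approx_C$-classes of paths. A morphism of category presentations $F:C\to C'$ maps sorts to sorts and function symbols to paths (extended to paths by concatenation), sending each equation of $C_E$ to a $\approx_{C'}$-provable equality; $F\approx G$ means they agree on sorts and $F(f)\approx G(f)$ for every function symbol. Profunctors: for small categories $\mathcal C,\mathcal D$, a profunctor $\mathcal P:\mathcal C\nrightarrow\mathcal D$ is a category $\mathcal P$ with a functor $\pi:\mathcal P\to\mathbf 2$ ($\mathbf 2$ having objects $0,1$ and one non-identity arrow $0\to1$) with $\pi^{-1}(0)=\mathcal C$, $\pi^{-1}(1)=\mathcal D$. A morphism of profunctors $\mathcal C\nrightarrow\mathcal D$ is a functor commuting with the projections to $\mathbf 2$ and restricting to the identity on $\mathcal C$ and $\mathcal D$; they form $\mathbf{Prof}(\mathcal C,\mathcal D)$. Uncurried presentations: given category presentations $C,D$, an uncurried profunctor presentation $P:C\nrightarrow D$ consists of a set $\mathrm{Fun}(P)$ of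 profunctor function symbols $x:c\to d$ with $c$ a sort of $C$ and $d$ a sort of $D$, and a set $P_E$ of equations between cross-paths, where the associated category presentation $|P|$ has sorts $\mathrm{Sort}(C)+\mathrm{Sort}(D)$, function symbols $\mathrm{Fun}(C)+\mathrm{Fun}(P)+\mathrm{Fun}(D)$ and equations $C_E+P_E+D_E$, and a cross-path is a path of $|P|$ from a sort of $C$ to a sort of $D$. $\approx_P$ is the restriction of $\approx_{|P|}$ to cross-paths. A morphism $F:P\to P'$ of uncurried presentations $C\nrightarrow D$ assigns to each $x:c\to d$ in $\mathrm{Fun}(P)$ a cross-path $F(x):c\to d$ of $P'$ such that the extension $|F|:|P|\to|P'|$ acting as the identity on the sorts and function symbols of $C$ and $D$ is a morphism of category presentations; composition is by substitution, giving the category $\mathbf{UnCurr}(C,D)$. $F\approx F'$ iff $|F|\approx|F'|$; $\mathbf{UnCurr}_\approx(C,D)$ is the quotient. The semantics $[\![P]\!]$ is the category $[\![|P|]\!]$ with $\pi$ sending sorts of $C$ to $0$ and sorts of $D$ to $1$, a profunctor $[\![C]\!]\nrightarrow[\![D]\!]$; a morphism $F$ is sent to $[\![|F|]\!]$, and provably equal morphisms have equal image. *)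

theory Defs
  imports Main
begin

text \<open>A small category with objects of type 'o and arrows of type 'a.
  Composition is written in diagrammatic order: Comp f g is "first f, then g".\<close>

record ('o, 'a) cat =
  Ob   :: "'o set"
  Ar   :: "'a set"
  Dom  :: "'a \<Rightarrow> 'o"
  Cod  :: "'a \<Rightarrow> 'o"
  Id   :: "'o \<Rightarrow> 'a"
  Comp :: "'a \<Rightarrow> 'a \<Rightarrow> 'a"

definition is_category :: "('o, 'a) cat \<Rightarrow> bool" where
  "is_category C \<longleftrightarrow>
     (\<forall>a\<in>Ar C. Dom C a \<in> Ob C \<and> Cod C a \<in> Ob C) \<and>
     (\<forall>ob\<in>Ob C. Id C ob \<in> Ar C \<and> Dom C (Id C ob) = ob \<and> Cod C (Id C ob) = ob) \<and>
     (\<forall>a\<in>Ar C. \<forall>b\<in>Ar C. Cod C a = Dom C b \<longrightarrow>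
        Comp C a b \<in> Ar C \<and> Dom C (Comp C a b) = Dom C a \<and> Cod C (Comp C a b) = Cod C b) \<and>
     (\<forall>a\<in>Ar C. Comp C (Id C (Dom C a)) a = a \<and> Comp C a (Id C (Cod C a)) = a) \<and>
     (\<forall>a\<in>Ar C. \<forall>b\<in>Ar C. \<forall>c\<in>Ar C. Cod C a = Dom C b \<longrightarrow> Cod C b = Dom C c \<longrightarrow>
        Comp C (Comp C a b) c = Comp C a (Comp C b c))"

text \<open>A functor is a pair (object map, arrow map); only its values on the carriers matter.\<close>

definition is_functor ::
  "('o, 'a) cat \<Rightarrow> ('o2, 'a2) cat \<Rightarrow> ('o \<Rightarrow> 'o2) \<times> ('a \<Rightarrow> 'a2) \<Rightarrow> bool" where
  "is_functor C C' F \<longleftrightarrow>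
     (\<forall>ob\<in>Ob C. fst F ob \<in> Ob C') \<and>
     (\<forall>a\<in>Ar C. snd F a \<in> Ar C' \<and> Dom C' (snd F a) = fst F (Dom C a) \<and>
                Cod C' (snd F a) = fst F (Cod C a)) \<and>
     (\<forall>ob\<in>Ob C. snd F (Id C ob) = Id C' (fst F ob)) \<and>
     (\<forall>a\<in>Ar C. \<forall>b\<in>Ar C. Cod C a = Dom C b \<longrightarrow>
        snd F (Comp C a b) = Comp C' (snd F a) (snd F b))"

definition fun_eq_on ::
  "('o, 'a) cat \<Rightarrow> ('o \<Rightarrow> 'o2) \<times> ('a \<Rightarrow> 'a2) \<Rightarrow> ('o \<Rightarrow> 'o2) \<times> ('a \<Rightarrow> 'a2) \<Rightarrow> bool" where
  "fun_eq_on C F G \<longleftrightarrow> (\<forall>ob\<in>Ob C. fst F ob = fst G ob) \<and> (\<forall>a\<in>Ar C. snd F a = snd G a)"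

definition fun_comp ::
  "('o2 \<Rightarrow> 'o3) \<times> ('a2 \<Rightarrow> 'a3) \<Rightarrow> ('o1 \<Rightarrow> 'o2) \<times> ('a1 \<Rightarrow> 'a2) \<Rightarrow> ('o1 \<Rightarrow> 'o3) \<times> ('a1 \<Rightarrow> 'a3)" where
  "fun_comp G F = (fst G \<circ> fst F, snd G \<circ> snd F)"

text \<open>The category 2: objects False (=0) and True (=1), arrows pairs (x,y) with x \<le> y.\<close>

definition cat_two :: "(bool, bool \<times> bool) cat" where
  "cat_two = \<lparr>Ob = UNIV, Ar = {(x, y). x \<le> y}, Dom = fst, Cod = snd,
              Id = (\<lambda>x. (x, x)), Comp = (\<lambda>a b. (fst a, snd b))\<rparr>"

text \<open>A profunctor CC -/-> DD: a category P, a functor pi : P \<rightarrow> 2, and the identifications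
  of CC with the fibre pi^-1(0) and of DD with the fibre pi^-1(1) (given as injective functors
  whose images are exactly these fibres).\<close>

record ('o1, 'a1, 'o2, 'a2, 'o, 'a) profunctor =
  pcat   :: "('o, 'a) cat"
  pi_ob  :: "'o \<Rightarrow> bool"
  pi_ar  :: "'a \<Rightarrow> bool \<times> bool"
  in0_ob :: "'o1 \<Rightarrow> 'o"
  in0_ar :: "'a1 \<Rightarrow> 'a"
  in1_ob :: "'o2 \<Rightarrow> 'o"
  in1_ar :: "'a2 \<Rightarrow> 'a"

definition is_profunctor ::
  "('o1, 'a1) cat \<Rightarrow> ('o2, 'a2) cat \<Rightarrow> ('o1, 'a1, 'o2, 'a2, 'o, 'a) profunctor \<Rightarrow> bool" where
  "is_profunctor CC DD P \<longleftrightarrow>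
     is_category CC \<and> is_category DD \<and> is_category (pcat P) \<and>
     is_functor (pcat P) cat_two (pi_ob P, pi_ar P) \<and>
     is_functor CC (pcat P) (in0_ob P, in0_ar P) \<and>
     inj_on (in0_ob P) (Ob CC) \<and> inj_on (in0_ar P) (Ar CC) \<and>
     in0_ob P ` Ob CC = {ob \<in> Ob (pcat P). pi_ob P ob = False} \<and>
     in0_ar P ` Ar CC = {a \<in> Ar (pcat P). pi_ar P a = (False, False)} \<and>
     is_functor DD (pcat P) (in1_ob P, in1_ar P) \<and>
     inj_on (in1_ob P) (Ob DD) \<and> inj_on (in1_ar P) (Ar DD) \<and>
     in1_ob P ` Ob DD = {ob \<in> Ob (pcat P). pi_ob P ob = True} \<and>
     in1_ar P ` Ar DD = {a \<in> Ar (pcat P). pi_ar P a = (True, True)}"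

definition prof_morph ::
  "('o1, 'a1) cat \<Rightarrow> ('o2, 'a2) cat \<Rightarrow> ('o1, 'a1, 'o2, 'a2, 'o, 'a) profunctor \<Rightarrow>
   ('o1, 'a1, 'o2, 'a2, 'p, 'b) profunctor \<Rightarrow> ('o \<Rightarrow> 'p) \<times> ('a \<Rightarrow> 'b) \<Rightarrow> bool" where
  "prof_morph CC DD P P' G \<longleftrightarrow>
     is_functor (pcat P) (pcat P') G \<and>
     (\<forall>ob\<in>Ob (pcat P). pi_ob P' (fst G ob) = pi_ob P ob) \<and>
     (\<forall>a\<in>Ar (pcat P). pi_ar P' (snd G a) = pi_ar P a) \<and>
     (\<forall>ob\<in>Ob CC. fst G (in0_ob P ob) = in0_ob P' ob) \<and>
     (\<forall>a\<in>Ar CC. snd G (in0_ar P a) = in0_ar P' a) \<and>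
     (\<forall>ob\<in>Ob DD. fst G (in1_ob P ob) = in1_ob P' ob) \<and>
     (\<forall>a\<in>Ar DD. snd G (in1_ar P a) = in1_ar P' a)"

definition prof_iso ::
  "('o1, 'a1) cat \<Rightarrow> ('o2, 'a2) cat \<Rightarrow> ('o1, 'a1, 'o2, 'a2, 'o, 'a) profunctor \<Rightarrow>
   ('o1, 'a1, 'o2, 'a2, 'p, 'b) profunctor \<Rightarrow> bool" where
  "prof_iso CC DD P P' \<longleftrightarrow>
     (\<exists>G H. prof_morph CC DD P P' G \<and> prof_morph CC DD P' P H \<and>
        fun_eq_on (pcat P) (fun_comp H G) (\<lambda>ob. ob, \<lambda>a. a) \<and>
        fun_eq_on (pcat P') (fun_comp G H) (\<lambda>ob. ob, \<lambda>a. a))"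

text \<open>Sorts of type 's, function symbols of type 'f. A path is a pair (c, fs) of a start sort c
  and a list of function symbols fs = f0 ... f(n-1) composed in diagrammatic order; (c, []) is 1_c.\<close>

record ('s, 'f) catpres =
  Sorts :: "'s set"
  Funs  :: "'f set"
  fsrc  :: "'f \<Rightarrow> 's"
  ftgt  :: "'f \<Rightarrow> 's"
  Eqs   :: "(('s \<times> 'f list) \<times> ('s \<times> 'f list)) set"

fun is_chain :: "('f \<Rightarrow> 's) \<Rightarrow> ('f \<Rightarrow> 's) \<Rightarrow> 'f set \<Rightarrow> 's \<Rightarrow> 'f list \<Rightarrow> bool" where
  "is_chain s t F c [] = True"
| "is_chain s t F c (f # fs) = (f \<in> F \<and> s f = c \<and> is_chain s t F (t f) fs)"

definition is_path :: "('s, 'f) catpres \<Rightarrow> 's \<times> 'f list \<Rightarrow> bool" where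
  "is_path C p \<longleftrightarrow> fst p \<in> Sorts C \<and> is_chain (fsrc C) (ftgt C) (Funs C) (fst p) (snd p)"

definition path_end :: "('s, 'f) catpres \<Rightarrow> 's \<times> 'f list \<Rightarrow> 's" where
  "path_end C p = (if snd p = [] then fst p else ftgt C (last (snd p)))"

definition parallel :: "('s, 'f) catpres \<Rightarrow> 's \<times> 'f list \<Rightarrow> 's \<times> 'f list \<Rightarrow> bool" where
  "parallel C p q \<longleftrightarrow> fst p = fst q \<and> path_end C p = path_end C q"

definition valid_catpres :: "('s, 'f) catpres \<Rightarrow> bool" where
  "valid_catpres C \<longleftrightarrow>
     (\<forall>f\<in>Funs C. fsrc C f \<in> Sorts C \<and> ftgt C f \<in> Sorts C) \<and>
     (\<forall>(p, q)\<in>Eqs C. is_path C p \<and> is_path C q \<and> parallel C p q)"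

inductive peq :: "('s, 'f) catpres \<Rightarrow> 's \<times> 'f list \<Rightarrow> 's \<times> 'f list \<Rightarrow> bool" for C where
  peq_ax:    "(p, q) \<in> Eqs C \<Longrightarrow> peq C p q"
| peq_refl:  "is_path C p \<Longrightarrow> peq C p p"
| peq_sym:   "peq C p q \<Longrightarrow> peq C q p"
| peq_trans: "peq C p q \<Longrightarrow> peq C q r \<Longrightarrow> peq C p r"
| peq_post:  "peq C p q \<Longrightarrow> f \<in> Funs C \<Longrightarrow> fsrc C f = path_end C p \<Longrightarrow>
                peq C (fst p, snd p @ [f]) (fst q, snd q @ [f])"
| peq_pre:   "peq C p q \<Longrightarrow> f \<in> Funs C \<Longrightarrow> ftgt C f = fst p \<Longrightarrow>
                peq C (fsrc C f, f # snd p) (fsrc C f, f # snd q)"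

definition pclass :: "('s, 'f) catpres \<Rightarrow> 's \<times> 'f list \<Rightarrow> ('s \<times> 'f list) set" where
  "pclass C p = {q. peq C p q}"

definition rep :: "('s \<times> 'f list) set \<Rightarrow> 's \<times> 'f list" where
  "rep X = (SOME p. p \<in> X)"

definition sem :: "('s, 'f) catpres \<Rightarrow> ('s, ('s \<times> 'f list) set) cat" where
  "sem C = \<lparr>Ob = Sorts C,
            Ar = {pclass C p | p. is_path C p},
            Dom = (\<lambda>X. fst (rep X)),
            Cod = (\<lambda>X. path_end C (rep X)),
            Id = (\<lambda>c. pclass C (c, [])),
            Comp = (\<lambda>X Y. pclass C (fst (rep X), snd (rep X) @ snd (rep Y)))\<rparr>"

definition apply_path ::
  "('s \<Rightarrow> 's2) \<Rightarrow> ('f \<Rightarrow> 's2 \<times> 'f2 list) \<Rightarrow> 's \<times> 'f list \<Rightarrow> 's2 \<times> 'f2 list" where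
  "apply_path Fs Ff p = (Fs (fst p), concat (map (\<lambda>f. snd (Ff f)) (snd p)))"

definition catpres_morph ::
  "('s, 'f) catpres \<Rightarrow> ('s2, 'f2) catpres \<Rightarrow> ('s \<Rightarrow> 's2) \<Rightarrow> ('f \<Rightarrow> 's2 \<times> 'f2 list) \<Rightarrow> bool" where
  "catpres_morph C C' Fs Ff \<longleftrightarrow>
     (\<forall>c\<in>Sorts C. Fs c \<in> Sorts C') \<and>
     (\<forall>f\<in>Funs C. is_path C' (Ff f) \<and> fst (Ff f) = Fs (fsrc C f) \<and>
                  path_end C' (Ff f) = Fs (ftgt C f)) \<and>
     (\<forall>(p, q)\<in>Eqs C. peq C' (apply_path Fs Ff p) (apply_path Fs Ff q))"

definition catpres_equiv ::
  "('s, 'f) catpres \<Rightarrow> ('s2, 'f2) catpres \<Rightarrow> ('s \<Rightarrow> 's2) \<Rightarrow> ('f \<Rightarrow> 's2 \<times> 'f2 list) \<Rightarrow>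
   ('s \<Rightarrow> 's2) \<Rightarrow> ('f \<Rightarrow> 's2 \<times> 'f2 list) \<Rightarrow> bool" where
  "catpres_equiv C C' Fs Ff Gs Gf \<longleftrightarrow>
     (\<forall>c\<in>Sorts C. Fs c = Gs c) \<and> (\<forall>f\<in>Funs C. peq C' (Ff f) (Gf f))"

definition sem_morph ::
  "('s2, 'f2) catpres \<Rightarrow> ('s \<Rightarrow> 's2) \<Rightarrow> ('f \<Rightarrow> 's2 \<times> 'f2 list) \<Rightarrow>
   ('s \<Rightarrow> 's2) \<times> (('s \<times> 'f list) set \<Rightarrow> ('s2 \<times> 'f2 list) set)" where
  "sem_morph C' Fs Ff = (Fs, \<lambda>X. pclass C' (apply_path Fs Ff (rep X)))"

text \<open>Profunctor function symbols of type 'x; the equations are between paths of |P|, whose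
  sorts are Sort(C)+Sort(D) and whose function symbols are Fun(C)+Fun(P)+Fun(D).\<close>

record ('c, 'd, 'cf, 'df, 'x) uncpres =
  UFuns :: "'x set"
  usrc  :: "'x \<Rightarrow> 'c"
  utgt  :: "'x \<Rightarrow> 'd"
  UEqs  :: "((('c + 'd) \<times> ('cf + 'x + 'df) list) \<times> (('c + 'd) \<times> ('cf + 'x + 'df) list)) set"

definition embC :: "'c \<times> 'cf list \<Rightarrow> ('c + 'd) \<times> ('cf + 'x + 'df) list" where
  "embC p = (Inl (fst p), map Inl (snd p))"

definition embD :: "'d \<times> 'df list \<Rightarrow> ('c + 'd) \<times> ('cf + 'x + 'df) list" where
  "embD p = (Inr (fst p), map (\<lambda>g. Inr (Inr g)) (snd p))"

definition tot ::
  "('c, 'cf) catpres \<Rightarrow> ('d, 'df) catpres \<Rightarrow> ('c, 'd, 'cf, 'df, 'x) uncpres \<Rightarrow>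
   ('c + 'd, 'cf + 'x + 'df) catpres" where
  "tot C D P = \<lparr>Sorts = Inl ` Sorts C \<union> Inr ` Sorts D,
     Funs = Inl ` Funs C \<union> (\<lambda>x. Inr (Inl x)) ` UFuns P \<union> (\<lambda>g. Inr (Inr g)) ` Funs D,
     fsrc = case_sum (\<lambda>f. Inl (fsrc C f)) (case_sum (\<lambda>x. Inl (usrc P x)) (\<lambda>g. Inr (fsrc D g))),
     ftgt = case_sum (\<lambda>f. Inl (ftgt C f)) (case_sum (\<lambda>x. Inr (utgt P x)) (\<lambda>g. Inr (ftgt D g))),
     Eqs = (\<lambda>(p, q). (embC p, embC q)) ` Eqs C \<union> UEqs P \<union> (\<lambda>(p, q). (embD p, embD q)) ` Eqs D\<rparr>"

definition cross_path ::
  "('c, 'cf) catpres \<Rightarrow> ('d, 'df) catpres \<Rightarrow> ('c, 'd, 'cf, 'df, 'x) uncpres \<Rightarrow>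
   ('c + 'd) \<times> ('cf + 'x + 'df) list \<Rightarrow> bool" where
  "cross_path C D P p \<longleftrightarrow> is_path (tot C D P) p \<and> isl (fst p) \<and> \<not> isl (path_end (tot C D P) p)"

definition valid_unc ::
  "('c, 'cf) catpres \<Rightarrow> ('d, 'df) catpres \<Rightarrow> ('c, 'd, 'cf, 'df, 'x) uncpres \<Rightarrow> bool" where
  "valid_unc C D P \<longleftrightarrow>
     (\<forall>x\<in>UFuns P. usrc P x \<in> Sorts C \<and> utgt P x \<in> Sorts D) \<and>
     (\<forall>(p, q)\<in>UEqs P. cross_path C D P p \<and> cross_path C D P q \<and> parallel (tot C D P) p q)"

definition totF ::
  "('c, 'cf) catpres \<Rightarrow> ('d, 'df) catpres \<Rightarrow> ('x \<Rightarrow> ('c + 'd) \<times> ('cf + 'y + 'df) list) \<Rightarrow>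
   ('cf + 'x + 'df) \<Rightarrow> ('c + 'd) \<times> ('cf + 'y + 'df) list" where
  "totF C D F = case_sum (\<lambda>f. (Inl (fsrc C f), [Inl f]))
                  (case_sum F (\<lambda>g. (Inr (fsrc D g), [Inr (Inr g)])))"

definition unc_morph ::
  "('c, 'cf) catpres \<Rightarrow> ('d, 'df) catpres \<Rightarrow> ('c, 'd, 'cf, 'df, 'x) uncpres \<Rightarrow>
   ('c, 'd, 'cf, 'df, 'y) uncpres \<Rightarrow> ('x \<Rightarrow> ('c + 'd) \<times> ('cf + 'y + 'df) list) \<Rightarrow> bool" where
  "unc_morph C D P P' F \<longleftrightarrow>
     (\<forall>x\<in>UFuns P. cross_path C D P' (F x) \<and> fst (F x) = Inl (usrc P x) \<and>
                   path_end (tot C D P') (F x) = Inr (utgt P x)) \<and>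
     catpres_morph (tot C D P) (tot C D P') (\<lambda>s. s) (totF C D F)"

definition unc_equiv ::
  "('c, 'cf) catpres \<Rightarrow> ('d, 'df) catpres \<Rightarrow> ('c, 'd, 'cf, 'df, 'x) uncpres \<Rightarrow>
   ('c, 'd, 'cf, 'df, 'y) uncpres \<Rightarrow> ('x \<Rightarrow> ('c + 'd) \<times> ('cf + 'y + 'df) list) \<Rightarrow>
   ('x \<Rightarrow> ('c + 'd) \<times> ('cf + 'y + 'df) list) \<Rightarrow> bool" where
  "unc_equiv C D P P' F F' \<longleftrightarrow>
     catpres_equiv (tot C D P) (tot C D P') (\<lambda>s. s) (totF C D F) (\<lambda>s. s) (totF C D F')"

definition unc_id ::
  "('c, 'd, 'cf, 'df, 'x) uncpres \<Rightarrow> 'x \<Rightarrow> ('c + 'd) \<times> ('cf + 'x + 'df) list" where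
  "unc_id P x = (Inl (usrc P x), [Inr (Inl x)])"

definition unc_comp ::
  "('c, 'cf) catpres \<Rightarrow> ('d, 'df) catpres \<Rightarrow> ('y \<Rightarrow> ('c + 'd) \<times> ('cf + 'z + 'df) list) \<Rightarrow>
   ('x \<Rightarrow> ('c + 'd) \<times> ('cf + 'y + 'df) list) \<Rightarrow> 'x \<Rightarrow> ('c + 'd) \<times> ('cf + 'z + 'df) list" where
  "unc_comp C D G F x = apply_path (\<lambda>s. s) (totF C D G) (F x)"

text \<open>Semantics [[P]] as a profunctor [[C]] -/-> [[D]]: the category [[|P|]], with pi sending sorts
  of C to 0 (False) and sorts of D to 1 (True); [[C]] and [[D]] are identified with the fibres
  via the inclusions of C and D into |P|.\<close>

definition sem_unc ::
  "('c, 'cf) catpres \<Rightarrow> ('d, 'df) catpres \<Rightarrow> ('c, 'd, 'cf, 'df, 'x) uncpres \<Rightarrow>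
   ('c, ('c \<times> 'cf list) set, 'd, ('d \<times> 'df list) set,
    'c + 'd, (('c + 'd) \<times> ('cf + 'x + 'df) list) set) profunctor" where
  "sem_unc C D P =
     \<lparr>pcat = sem (tot C D P),
      pi_ob = (\<lambda>s. \<not> isl s),
      pi_ar = (\<lambda>X. (\<not> isl (Dom (sem (tot C D P)) X), \<not> isl (Cod (sem (tot C D P)) X))),
      in0_ob = Inl,
      in0_ar = (\<lambda>X. pclass (tot C D P) (embC (rep X))),
      in1_ob = Inr,
      in1_ar = (\<lambda>X. pclass (tot C D P) (embD (rep X)))\<rparr>"

definition sem_unc_morph ::
  "('c, 'cf) catpres \<Rightarrow> ('d, 'df) catpres \<Rightarrow> ('c, 'd, 'cf, 'df, 'y) uncpres \<Rightarrow>
   ('x \<Rightarrow> ('c + 'd) \<times> ('cf + 'y + 'df) list) \<Rightarrow>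
   ('c + 'd \<Rightarrow> 'c + 'd) \<times> ((('c + 'd) \<times> ('cf + 'x + 'df) list) set \<Rightarrow> (('c + 'd) \<times> ('cf + 'y + 'df) list) set)" where
  "sem_unc_morph C D P' F = sem_morph (tot C D P') (\<lambda>s. s) (totF C D F)"

end

theory Submission
  imports Defs
begin

text \<open>
  [[C]] is the category freely generated by the graph of C modulo the equations of C: a model of C
  in a category K (objects for the sorts, arrows for the symbols, satisfying the equations) lifts
  to a functor [[C]] \<rightarrow> K that interprets a path as the composite of its symbols, and every functor
  out of [[C]] is of this form. Since the equations of an uncurried presentation P relate only
  cross-paths, |P| is conservative over C and D, so [[C]] and [[D]] are the fibres of [[P]] over 0
  and 1. A morphism of profunctors out of [[P]] is determined by its values on the symbols of P,
  which gives faithfulness; choosing representative paths for these values gives fullness.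
  A profunctor Q is presented by one symbol for each heteromorphism of Q together with all
  equations between cross-paths that have the same interpretation in Q; interpreting this
  presentation in Q is then bijective on objects and arrows.
\<close>

lemma is_categoryD:
  assumes "is_category K"
  shows "a \<in> Ar K \<Longrightarrow> Dom K a \<in> Ob K" "a \<in> Ar K \<Longrightarrow> Cod K a \<in> Ob K"
    "ob \<in> Ob K \<Longrightarrow> Id K ob \<in> Ar K" "ob \<in> Ob K \<Longrightarrow> Dom K (Id K ob) = ob"
    "ob \<in> Ob K \<Longrightarrow> Cod K (Id K ob) = ob"
    "a \<in> Ar K \<Longrightarrow> b \<in> Ar K \<Longrightarrow> Cod K a = Dom K b \<Longrightarrow> Comp K a b \<in> Ar K"
    "a \<in> Ar K \<Longrightarrow> b \<in> Ar K \<Longrightarrow> Cod K a = Dom K b \<Longrightarrow> Dom K (Comp K a b) = Dom K a"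
    "a \<in> Ar K \<Longrightarrow> b \<in> Ar K \<Longrightarrow> Cod K a = Dom K b \<Longrightarrow> Cod K (Comp K a b) = Cod K b"
    "a \<in> Ar K \<Longrightarrow> Comp K (Id K (Dom K a)) a = a" "a \<in> Ar K \<Longrightarrow> Comp K a (Id K (Cod K a)) = a"
    "a \<in> Ar K \<Longrightarrow> b \<in> Ar K \<Longrightarrow> c \<in> Ar K \<Longrightarrow> Cod K a = Dom K b \<Longrightarrow> Cod K b = Dom K c \<Longrightarrow>
        Comp K (Comp K a b) c = Comp K a (Comp K b c)"
  using assms unfolding is_category_def by blast+

lemma is_functorD:
  assumes "is_functor A B F"
  shows "ob \<in> Ob A \<Longrightarrow> fst F ob \<in> Ob B"
    "a \<in> Ar A \<Longrightarrow> snd F a \<in> Ar B" "a \<in> Ar A \<Longrightarrow> Dom B (snd F a) = fst F (Dom A a)"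
    "a \<in> Ar A \<Longrightarrow> Cod B (snd F a) = fst F (Cod A a)"
    "ob \<in> Ob A \<Longrightarrow> snd F (Id A ob) = Id B (fst F ob)"
    "a \<in> Ar A \<Longrightarrow> b \<in> Ar A \<Longrightarrow> Cod A a = Dom A b \<Longrightarrow>
       snd F (Comp A a b) = Comp B (snd F a) (snd F b)"
  using assms unfolding is_functor_def by blast+

lemma is_functor_cong:
  assumes "is_category A" "is_functor A B F" "fun_eq_on A F G"
  shows "is_functor A B G"
proof -
  have ob: "\<And>ob. ob \<in> Ob A \<Longrightarrow> fst G ob = fst F ob" and ar: "\<And>a. a \<in> Ar A \<Longrightarrow> snd G a = snd F a"
    using assms(3) by (simp_all add: fun_eq_on_def)
  note F = is_functorD[OF assms(2)] and A = is_categoryD[OF assms(1)]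
  show ?thesis
    unfolding is_functor_def
  proof (intro conjI ballI impI)
    fix a b assume "a \<in> Ar A" "b \<in> Ar A" "Cod A a = Dom A b"
    then show "snd G (Comp A a b) = Comp B (snd G a) (snd G b)" using F(6) A(6) ar by simp
  qed (use F A ob ar in simp_all)
qed

lemma functor_to_cat_two:
  assumes "is_category K" "\<And>a. a \<in> Ar K \<Longrightarrow> pi (Dom K a) \<le> pi (Cod K a)"
  shows "is_functor K cat_two (pi, \<lambda>a. (pi (Dom K a), pi (Cod K a)))"
proof -
  let ?F = "(pi, \<lambda>a. (pi (Dom K a), pi (Cod K a)))"
  show ?thesis
    unfolding is_functor_def
  proof (intro conjI ballI impI)
    fix ob assume "ob \<in> Ob K"
    then show "snd ?F (Id K ob) = Id cat_two (fst ?F ob)"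
      using is_categoryD(4,5)[OF assms(1)] by (simp add: cat_two_def)
  next
    fix a b assume "a \<in> Ar K" "b \<in> Ar K" "Cod K a = Dom K b"
    then show "snd ?F (Comp K a b) = Comp cat_two (snd ?F a) (snd ?F b)"
      using is_categoryD(7,8)[OF assms(1)] by (simp add: cat_two_def)
  qed (use assms(2) in \<open>simp_all add: cat_two_def\<close>)
qed

lemma functor_cat_two_ar:
  assumes "is_functor K cat_two (po, pa)" "a \<in> Ar K"
  shows "pa a = (po (Dom K a), po (Cod K a))" "po (Dom K a) \<le> po (Cod K a)"
  using is_functorD(2-4)[OF assms(1,2)] by (auto simp: cat_two_def prod_eq_iff)

lemma inv_into_functor:
  assumes "is_category A" "is_functor A B G"
    and bo: "bij_betw (fst G) (Ob A) (Ob B)" and ba: "bij_betw (snd G) (Ar A) (Ar B)"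
  shows "is_functor B A (inv_into (Ob A) (fst G), inv_into (Ar A) (snd G))"
proof -
  let ?Ho = "inv_into (Ob A) (fst G)" and ?Ha = "inv_into (Ar A) (snd G)"
  note G = is_functorD[OF assms(2)] and A = is_categoryD[OF assms(1)]
  have Ho: "?Ho ob \<in> Ob A" "fst G (?Ho ob) = ob" if "ob \<in> Ob B" for ob
    using that bo by (auto simp: bij_betw_def intro: inv_into_into f_inv_into_f)
  have Ha: "?Ha b \<in> Ar A" "snd G (?Ha b) = b" if "b \<in> Ar B" for b
    using that ba by (auto simp: bij_betw_def intro: inv_into_into f_inv_into_f)
  have Ho_eq: "?Ho ob = x" if "x \<in> Ob A" "fst G x = ob" for ob x
    using bij_betw_inv_into_left[OF bo that(1)] that(2) by simp
  have Ha_eq: "?Ha b = y" if "y \<in> Ar A" "snd G y = b" for b y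
    using bij_betw_inv_into_left[OF ba that(1)] that(2) by simp
  have dom: "Dom A (?Ha b) = ?Ho (Dom B b)" and cod: "Cod A (?Ha b) = ?Ho (Cod B b)" if "b \<in> Ar B" for b
  proof -
    have "fst G (Dom A (?Ha b)) = Dom B b" "fst G (Cod A (?Ha b)) = Cod B b"
      using G(3,4)[OF Ha(1)[OF that]] Ha(2)[OF that] by simp_all
    then show "Dom A (?Ha b) = ?Ho (Dom B b)" "Cod A (?Ha b) = ?Ho (Cod B b)"
      using Ho_eq A(1,2)[OF Ha(1)[OF that]] by simp_all
  qed
  show ?thesis
    unfolding is_functor_def
  proof (intro conjI ballI impI)
    fix ob assume "ob \<in> Ob B"
    then show "snd (?Ho, ?Ha) (Id B ob) = Id A (fst (?Ho, ?Ha) ob)"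
      using Ha_eq A(3) G(5) Ho by simp
  next
    fix a b assume ab: "a \<in> Ar B" "b \<in> Ar B" "Cod B a = Dom B b"
    then have "Cod A (?Ha a) = Dom A (?Ha b)" using dom cod by simp
    then show "snd (?Ho, ?Ha) (Comp B a b) = Comp A (snd (?Ho, ?Ha) a) (snd (?Ho, ?Ha) b)"
      using Ha_eq A(6) G(6) Ha ab by simp
  qed (use Ho Ha dom cod in simp_all)
qed

definition pcomp :: "'s \<times> 'f list \<Rightarrow> 's \<times> 'f list \<Rightarrow> 's \<times> 'f list" where
  "pcomp p q = (fst p, snd p @ snd q)"

lemma is_chain_append:
  "is_chain s t F c (xs @ ys) \<longleftrightarrow>
     is_chain s t F c xs \<and> is_chain s t F (if xs = [] then c else t (last xs)) ys"
  by (induction xs arbitrary: c) auto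

lemma is_chain_last: "is_chain s t F c fs \<Longrightarrow> fs \<noteq> [] \<Longrightarrow> last fs \<in> F"
  by (induction fs arbitrary: c) auto

lemma path_end_Nil [simp]: "path_end C (c, []) = c"
  by (simp add: path_end_def)

lemma path_end_single [simp]: "path_end C (c, [f]) = ftgt C f"
  by (simp add: path_end_def)

lemma path_end_Cons: "path_end C (c, f # fs) = path_end C (ftgt C f, fs)"
  by (simp add: path_end_def)

lemma path_end_pcomp: "path_end C p = fst q \<Longrightarrow> path_end C (pcomp p q) = path_end C q"
  by (auto simp: path_end_def pcomp_def)

lemma is_path_Nil [simp]: "is_path C (c, []) \<longleftrightarrow> c \<in> Sorts C"
  by (simp add: is_path_def)

lemma is_path_single:
  "valid_catpres C \<Longrightarrow> f \<in> Funs C \<Longrightarrow> is_path C (fsrc C f, [f])"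
  by (simp add: is_path_def valid_catpres_def)

lemma is_path_pcomp:
  "is_path C p \<Longrightarrow> is_path C q \<Longrightarrow> path_end C p = fst q \<Longrightarrow> is_path C (pcomp p q)"
  by (auto simp: is_path_def pcomp_def is_chain_append path_end_def)

lemma path_end_in_Sorts: "valid_catpres C \<Longrightarrow> is_path C p \<Longrightarrow> path_end C p \<in> Sorts C"
  unfolding path_end_def is_path_def valid_catpres_def
  using is_chain_last by fastforce

lemma path_induct [consumes 2, case_names Nil Cons]:
  assumes "valid_catpres C" "is_path C p"
    and Nil: "\<And>c. c \<in> Sorts C \<Longrightarrow> P (c, [])"
    and Cons: "\<And>f fs. f \<in> Funs C \<Longrightarrow> is_path C (ftgt C f, fs) \<Longrightarrow> P (ftgt C f, fs) \<Longrightarrow>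
                 P (fsrc C f, f # fs)"
  shows "P p"
proof -
  have "c \<in> Sorts C \<Longrightarrow> is_chain (fsrc C) (ftgt C) (Funs C) c fs \<Longrightarrow> P (c, fs)" for c fs
  proof (induction fs arbitrary: c)
    case (Cons f fs)
    then have "ftgt C f \<in> Sorts C" using assms(1) by (auto simp: valid_catpres_def)
    with Cons show ?case
      using Cons.IH[of "ftgt C f"] Cons.prems by (auto simp: is_path_def intro!: assms(4))
  qed (rule Nil)
  then show ?thesis using assms(2) by (cases p) (simp add: is_path_def)
qed

lemma peq_parallel_paths:
  assumes "valid_catpres C"
  shows "peq C p q \<Longrightarrow> is_path C p \<and> is_path C q \<and> fst p = fst q \<and> path_end C p = path_end C q"
proof (induction rule: peq.induct)
  case (peq_ax p q)
  then show ?case using assms unfolding valid_catpres_def parallel_def by auto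
next
  case (peq_post p q f)
  then show ?case using assms
    by (auto simp: is_path_def is_chain_append path_end_def valid_catpres_def)
next
  case (peq_pre p q f)
  then show ?case using assms
    by (auto simp: is_path_def path_end_def valid_catpres_def)
qed auto

lemma peq_append_right:
  "peq C p q \<Longrightarrow> is_chain (fsrc C) (ftgt C) (Funs C) (path_end C p) fs \<Longrightarrow>
     peq C (fst p, snd p @ fs) (fst q, snd q @ fs)"
proof (induction fs arbitrary: p q)
  case (Cons f fs)
  then have "peq C (fst p, snd p @ [f]) (fst q, snd q @ [f])"
    by (intro peq_post) auto
  from Cons.IH[OF this] Cons.prems show ?case by (simp add: path_end_def)
qed simp

lemma peq_append_left:
  assumes "valid_catpres C"
  shows "peq C p q \<Longrightarrow> is_chain (fsrc C) (ftgt C) (Funs C) c fs \<Longrightarrow>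
     (if fs = [] then c else ftgt C (last fs)) = fst p \<Longrightarrow>
     peq C (c, fs @ snd p) (c, fs @ snd q)"
proof (induction fs arbitrary: c)
  case Nil
  then have "fst q = c" using peq_parallel_paths[OF assms] by auto
  then show ?case using Nil by (cases p; cases q) auto
next
  case (Cons f fs)
  have "peq C (ftgt C f, fs @ snd p) (ftgt C f, fs @ snd q)"
    using Cons by (intro Cons.IH) (auto split: if_splits)
  from peq_pre[OF this, of f] Cons.prems show ?case by auto
qed

lemma peq_pcomp:
  assumes "valid_catpres C" "peq C p p'" "peq C q q'" "path_end C p = fst q"
  shows "peq C (pcomp p q) (pcomp p' q')"
proof -
  have p': "is_path C p'" "fst p = fst p'" "path_end C p = path_end C p'"
    and q: "is_path C q" "fst q = fst q'"
    using peq_parallel_paths[OF assms(1) assms(2)] peq_parallel_paths[OF assms(1) assms(3)] by auto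
  have "peq C (pcomp p q) (pcomp p' q)"
    unfolding pcomp_def using peq_append_right[OF assms(2)] q assms(4) by (auto simp: is_path_def)
  moreover have "peq C (pcomp p' q) (pcomp p' q')"
    unfolding pcomp_def using peq_append_left[OF assms(1,3), of "fst p'" "snd p'"] p' q assms(4)
    by (auto simp: is_path_def path_end_def)
  ultimately show ?thesis by (rule peq_trans)
qed

lemma pclass_eq_iff:
  assumes "is_path C p"
  shows "pclass C p = pclass C q \<longleftrightarrow> peq C p q"
proof
  assume "pclass C p = pclass C q"
  moreover have "p \<in> pclass C p" using assms by (simp add: pclass_def peq_refl)
  ultimately show "peq C p q" by (auto simp: pclass_def intro: peq_sym)
qed (auto simp: pclass_def intro: peq_trans peq_sym)

lemma peq_rep_pclass:
  assumes "is_path C p"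
  shows "peq C p (rep (pclass C p))"
proof -
  have "p \<in> pclass C p" using assms by (simp add: pclass_def peq_refl)
  then have "rep (pclass C p) \<in> pclass C p" unfolding rep_def by (rule someI)
  then show ?thesis by (simp add: pclass_def)
qed

lemma rep_pclass:
  assumes "valid_catpres C" "is_path C p"
  shows "is_path C (rep (pclass C p))" "fst (rep (pclass C p)) = fst p"
    "path_end C (rep (pclass C p)) = path_end C p" "pclass C (rep (pclass C p)) = pclass C p"
  using peq_parallel_paths[OF assms(1) peq_rep_pclass[OF assms(2)]]
    pclass_eq_iff[OF assms(2)] peq_rep_pclass[OF assms(2)] by metis+

lemma sem_Ob [simp]: "Ob (sem C) = Sorts C"
  by (simp add: sem_def)

lemma sem_Ar: "X \<in> Ar (sem C) \<longleftrightarrow> (\<exists>p. is_path C p \<and> X = pclass C p)"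
  by (auto simp: sem_def)

lemma sem_ArE:
  assumes "X \<in> Ar (sem C)"
  obtains p where "is_path C p" "X = pclass C p"
  using assms by (auto simp: sem_Ar)

lemma pclass_in_sem_Ar: "is_path C p \<Longrightarrow> pclass C p \<in> Ar (sem C)"
  unfolding sem_def by (cases p) auto

lemma sem_Id: "Id (sem C) c = pclass C (c, [])"
  by (simp add: sem_def)

lemma sem_Dom_Cod:
  assumes "valid_catpres C" "is_path C p"
  shows "Dom (sem C) (pclass C p) = fst p" "Cod (sem C) (pclass C p) = path_end C p"
  using rep_pclass[OF assms] by (auto simp: sem_def)

lemma sem_rep:
  assumes "valid_catpres C" "X \<in> Ar (sem C)"
  shows "is_path C (rep X)" "pclass C (rep X) = X"
  using assms rep_pclass by (metis sem_Ar)+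

lemma sem_Comp:
  assumes "valid_catpres C" "is_path C p" "is_path C q" "path_end C p = fst q"
  shows "Comp (sem C) (pclass C p) (pclass C q) = pclass C (pcomp p q)"
proof -
  have "peq C (pcomp p q) (pcomp (rep (pclass C p)) (rep (pclass C q)))"
    using assms by (intro peq_pcomp peq_rep_pclass) auto
  then have "pclass C (pcomp (rep (pclass C p)) (rep (pclass C q))) = pclass C (pcomp p q)"
    using pclass_eq_iff is_path_pcomp[OF assms(2-4)] by metis
  then show ?thesis by (simp add: sem_def pcomp_def)
qed

lemma sem_Comp_Cons:
  assumes "valid_catpres C" "f \<in> Funs C" "is_path C (ftgt C f, fs)"
  shows "pclass C (fsrc C f, f # fs) =
    Comp (sem C) (pclass C (fsrc C f, [f])) (pclass C (ftgt C f, fs))"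
  using sem_Comp[OF assms(1) is_path_single[OF assms(1,2)] assms(3)] by (simp add: pcomp_def path_end_def)

lemma sem_category:
  assumes "valid_catpres C"
  shows "is_category (sem C)"
  unfolding is_category_def
proof (intro conjI ballI impI)
  fix a assume "a \<in> Ar (sem C)"
  then obtain p where p: "is_path C p" "a = pclass C p" by (rule sem_ArE)
  note dc = sem_Dom_Cod[OF assms p(1)] and e = path_end_in_Sorts[OF assms p(1)]
  show "Dom (sem C) a \<in> Ob (sem C)" "Cod (sem C) a \<in> Ob (sem C)"
    using p dc e by (auto simp: is_path_def)
  show "Comp (sem C) (Id (sem C) (Dom (sem C) a)) a = a"
    using p dc sem_Comp[OF assms _ p(1), of "(fst p, [])"] by (auto simp: sem_Id pcomp_def is_path_def)
  show "Comp (sem C) a (Id (sem C) (Cod (sem C) a)) = a"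
    using p dc e sem_Comp[OF assms p(1), of "(path_end C p, [])"] by (auto simp: sem_Id pcomp_def)
next
  fix ob assume "ob \<in> Ob (sem C)"
  then show "Id (sem C) ob \<in> Ar (sem C)" "Dom (sem C) (Id (sem C) ob) = ob"
    "Cod (sem C) (Id (sem C) ob) = ob"
    using sem_Dom_Cod[OF assms, of "(ob, [])"] by (auto simp: sem_Id intro: pclass_in_sem_Ar)
next
  fix a b assume ab: "a \<in> Ar (sem C)" "b \<in> Ar (sem C)" "Cod (sem C) a = Dom (sem C) b"
  then obtain p q where p: "is_path C p" "a = pclass C p" and q: "is_path C q" "b = pclass C q"
    by (meson sem_ArE)
  have e: "path_end C p = fst q" using ab p q sem_Dom_Cod[OF assms] by simp
  note pq = is_path_pcomp[OF p(1) q(1) e]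
  show "Comp (sem C) a b \<in> Ar (sem C)" "Dom (sem C) (Comp (sem C) a b) = Dom (sem C) a"
    "Cod (sem C) (Comp (sem C) a b) = Cod (sem C) b"
    using p q sem_Comp[OF assms p(1) q(1) e] sem_Dom_Cod[OF assms] pq path_end_pcomp[OF e]
    by (auto simp: pcomp_def intro: pclass_in_sem_Ar)
next
  fix a b c assume abc: "a \<in> Ar (sem C)" "b \<in> Ar (sem C)" "c \<in> Ar (sem C)"
    "Cod (sem C) a = Dom (sem C) b" "Cod (sem C) b = Dom (sem C) c"
  then obtain p q r where p: "is_path C p" "a = pclass C p" and q: "is_path C q" "b = pclass C q"
    and r: "is_path C r" "c = pclass C r"
    by (meson sem_ArE)
  have e1: "path_end C p = fst q" and e2: "path_end C q = fst r"
    using abc p q r sem_Dom_Cod[OF assms] by simp_all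
  show "Comp (sem C) (Comp (sem C) a b) c = Comp (sem C) a (Comp (sem C) b c)"
    using p q r sem_Comp[OF assms p(1) q(1) e1] sem_Comp[OF assms q(1) r(1) e2]
      sem_Comp[OF assms is_path_pcomp[OF p(1) q(1) e1] r(1)]
      sem_Comp[OF assms p(1) is_path_pcomp[OF q(1) r(1) e2]] path_end_pcomp[OF e1] e1 e2
    by (auto simp: pcomp_def)
qed

section \<open>Functors out of a presented category\<close>

definition path_interp ::
  "('s, 'f) catpres \<Rightarrow> ('o, 'a) cat \<Rightarrow> ('s \<Rightarrow> 'o) \<Rightarrow> ('f \<Rightarrow> 'a) \<Rightarrow> 's \<times> 'f list \<Rightarrow> 'a" where
  "path_interp C K ob ar p = foldr (\<lambda>f x. Comp K (ar f) x) (snd p) (Id K (ob (path_end C p)))"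

lemma path_interp_Nil [simp]: "path_interp C K ob ar (c, []) = Id K (ob c)"
  by (simp add: path_interp_def)

lemma path_interp_Cons:
  "path_interp C K ob ar (c, f # fs) = Comp K (ar f) (path_interp C K ob ar (ftgt C f, fs))"
  by (simp add: path_interp_def path_end_Cons)

lemma path_interp_cong:
  assumes "valid_catpres C" "is_path C p"
    and "\<And>c. c \<in> Sorts C \<Longrightarrow> ob c = ob' c" "\<And>f. f \<in> Funs C \<Longrightarrow> ar f = ar' f"
  shows "path_interp C K ob ar p = path_interp C K ob' ar' p"
  using assms(1,2) by (induction rule: path_induct) (simp_all add: assms(3,4) path_interp_Cons)

definition is_interp :: "('s, 'f) catpres \<Rightarrow> ('o, 'a) cat \<Rightarrow> ('s \<Rightarrow> 'o) \<Rightarrow> ('f \<Rightarrow> 'a) \<Rightarrow> bool" where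
  "is_interp C K ob ar \<longleftrightarrow> (\<forall>c\<in>Sorts C. ob c \<in> Ob K) \<and>
     (\<forall>f\<in>Funs C. ar f \<in> Ar K \<and> Dom K (ar f) = ob (fsrc C f) \<and> Cod K (ar f) = ob (ftgt C f))"

definition is_model :: "('s, 'f) catpres \<Rightarrow> ('o, 'a) cat \<Rightarrow> ('s \<Rightarrow> 'o) \<Rightarrow> ('f \<Rightarrow> 'a) \<Rightarrow> bool" where
  "is_model C K ob ar \<longleftrightarrow> is_interp C K ob ar \<and>
     (\<forall>(p, q)\<in>Eqs C. path_interp C K ob ar p = path_interp C K ob ar q)"

lemma is_model_interp: "is_model C K ob ar \<Longrightarrow> is_interp C K ob ar"
  by (simp add: is_model_def)

lemma path_interp_typed:
  assumes "valid_catpres C" "is_category K" "is_interp C K ob ar" "is_path C p"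
  shows "path_interp C K ob ar p \<in> Ar K \<and> Dom K (path_interp C K ob ar p) = ob (fst p) \<and>
    Cod K (path_interp C K ob ar p) = ob (path_end C p)"
  using assms(1,4)
proof (induction rule: path_induct)
  case (Nil c)
  then show ?case using assms(3) is_categoryD(3-5)[OF assms(2)] by (simp add: is_interp_def)
next
  case (Cons f fs)
  then show ?case
    using assms(3) is_categoryD(6-8)[OF assms(2)]
    by (simp add: is_interp_def path_interp_Cons path_end_Cons)
qed

lemma path_interp_pcomp:
  assumes "valid_catpres C" "is_category K" "is_interp C K ob ar"
    and "is_path C p" "is_path C q" "path_end C p = fst q"
  shows "path_interp C K ob ar (pcomp p q) = Comp K (path_interp C K ob ar p) (path_interp C K ob ar q)"
  using assms(1,4,6)
proof (induction rule: path_induct)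
  case (Nil c)
  then have "pcomp (c, []) q = q" by (simp add: pcomp_def)
  moreover have "path_interp C K ob ar q \<in> Ar K" "Dom K (path_interp C K ob ar q) = ob c"
    using path_interp_typed[OF assms(1-3,5)] Nil by simp_all
  ultimately show ?case using is_categoryD(9)[OF assms(2)] by fastforce
next
  case (Cons f fs)
  let ?I = "path_interp C K ob ar"
  have e: "path_end C (ftgt C f, fs) = fst q" using Cons.prems by (simp add: path_end_Cons)
  have f: "ar f \<in> Ar K" "Cod K (ar f) = ob (ftgt C f)"
    using Cons.hyps(1) assms(3) by (simp_all add: is_interp_def)
  have t: "?I (ftgt C f, fs) \<in> Ar K" "Dom K (?I (ftgt C f, fs)) = ob (ftgt C f)"
      "Cod K (?I (ftgt C f, fs)) = ob (fst q)"
    using path_interp_typed[OF assms(1-3) Cons.hyps(2)] e by simp_all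
  have tq: "?I q \<in> Ar K" "Dom K (?I q) = ob (fst q)"
    using path_interp_typed[OF assms(1-3,5)] by simp_all
  have "?I (pcomp (fsrc C f, f # fs) q) = Comp K (ar f) (?I (pcomp (ftgt C f, fs) q))"
    by (simp add: pcomp_def path_interp_Cons)
  also have "\<dots> = Comp K (ar f) (Comp K (?I (ftgt C f, fs)) (?I q))"
    using Cons.IH[OF e] by simp
  also have "\<dots> = Comp K (Comp K (ar f) (?I (ftgt C f, fs))) (?I q)"
    by (rule is_categoryD(11)[OF assms(2) f(1) t(1) tq(1), symmetric]) (simp_all add: f t tq)
  also have "\<dots> = Comp K (?I (fsrc C f, f # fs)) (?I q)"
    by (simp add: path_interp_Cons)
  finally show ?case .
qed

lemma path_interp_peq:
  assumes "valid_catpres C" "is_category K" "is_model C K ob ar"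
  shows "peq C p q \<Longrightarrow> path_interp C K ob ar p = path_interp C K ob ar q"
proof (induction rule: peq.induct)
  case (peq_ax p q)
  then show ?case using assms(3) by (auto simp: is_model_def)
next
  case (peq_post p q f)
  note comp = path_interp_pcomp[OF assms(1,2) is_model_interp[OF assms(3)]]
  have s: "is_path C (fsrc C f, [f])" by (rule is_path_single[OF assms(1) peq_post.hyps(2)])
  have pp: "is_path C p" "is_path C q" "path_end C p = fsrc C f" "path_end C q = fsrc C f"
    using peq_parallel_paths[OF assms(1) peq_post.hyps(1)] peq_post.hyps(3) by auto
  have "(fst p, snd p @ [f]) = pcomp p (fsrc C f, [f])" "(fst q, snd q @ [f]) = pcomp q (fsrc C f, [f])"
    by (simp_all add: pcomp_def)
  then show ?case using comp[OF pp(1) s] comp[OF pp(2) s] pp(3,4) peq_post.IH by simp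
next
  case (peq_pre p q f)
  note comp = path_interp_pcomp[OF assms(1,2) is_model_interp[OF assms(3)]]
  have s: "is_path C (fsrc C f, [f])" by (rule is_path_single[OF assms(1) peq_pre.hyps(2)])
  have pp: "is_path C p" "is_path C q" "ftgt C f = fst p" "ftgt C f = fst q"
    using peq_parallel_paths[OF assms(1) peq_pre.hyps(1)] peq_pre.hyps(3) by auto
  have "(fsrc C f, f # snd p) = pcomp (fsrc C f, [f]) p" "(fsrc C f, f # snd q) = pcomp (fsrc C f, [f]) q"
    by (simp_all add: pcomp_def)
  then show ?case using comp[OF s pp(1)] comp[OF s pp(2)] pp(3,4) peq_pre.IH by simp
qed simp_all

lemma path_interp_single:
  assumes "is_category K" "is_interp C K ob ar" "f \<in> Funs C"
  shows "path_interp C K ob ar (fsrc C f, [f]) = ar f"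
  using assms(2,3) is_categoryD(10)[OF assms(1), of "ar f"]
  by (simp add: path_interp_Cons is_interp_def)

definition sem_lift ::
  "('s, 'f) catpres \<Rightarrow> ('o, 'a) cat \<Rightarrow> ('s \<Rightarrow> 'o) \<Rightarrow> ('f \<Rightarrow> 'a) \<Rightarrow>
   ('s \<Rightarrow> 'o) \<times> (('s \<times> 'f list) set \<Rightarrow> 'a)" where
  "sem_lift C K ob ar = (ob, \<lambda>X. path_interp C K ob ar (rep X))"

lemma sem_lift_pclass:
  assumes "valid_catpres C" "is_category K" "is_model C K ob ar" "is_path C p"
  shows "snd (sem_lift C K ob ar) (pclass C p) = path_interp C K ob ar p"
  using path_interp_peq[OF assms(1-3) peq_rep_pclass[OF assms(4)]] by (simp add: sem_lift_def)

lemma sem_lift_functor: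
  assumes "valid_catpres C" "is_category K" "is_model C K ob ar"
  shows "is_functor (sem C) K (sem_lift C K ob ar)"
proof -
  let ?L = "sem_lift C K ob ar"
  have interp: "is_interp C K ob ar" using assms(3) by (rule is_model_interp)
  note lift = sem_lift_pclass[OF assms] and typed = path_interp_typed[OF assms(1,2) interp]
  show ?thesis
    unfolding is_functor_def
  proof (intro conjI ballI impI)
    fix c assume "c \<in> Ob (sem C)"
    then show "fst ?L c \<in> Ob K" "snd ?L (Id (sem C) c) = Id K (fst ?L c)"
      using interp lift[of "(c, [])"] by (simp_all add: is_interp_def sem_lift_def sem_Id)
  next
    fix a assume "a \<in> Ar (sem C)"
    then obtain p where p: "is_path C p" "a = pclass C p" by (rule sem_ArE)
    then show "snd ?L a \<in> Ar K" "Dom K (snd ?L a) = fst ?L (Dom (sem C) a)"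
      "Cod K (snd ?L a) = fst ?L (Cod (sem C) a)"
      using lift typed sem_Dom_Cod[OF assms(1)] by (simp_all add: sem_lift_def)
  next
    fix a b assume ab: "a \<in> Ar (sem C)" "b \<in> Ar (sem C)" "Cod (sem C) a = Dom (sem C) b"
    then obtain p q where p: "is_path C p" "a = pclass C p" and q: "is_path C q" "b = pclass C q"
      by (meson sem_ArE)
    have e: "path_end C p = fst q" using ab p q sem_Dom_Cod[OF assms(1)] by simp
    have "snd ?L (Comp (sem C) a b) = snd ?L (pclass C (pcomp p q))"
      using p q sem_Comp[OF assms(1) p(1) q(1) e] by simp
    also have "\<dots> = path_interp C K ob ar (pcomp p q)"
      by (rule lift[OF is_path_pcomp[OF p(1) q(1) e]])
    also have "\<dots> = Comp K (path_interp C K ob ar p) (path_interp C K ob ar q)"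
      by (rule path_interp_pcomp[OF assms(1,2) interp p(1) q(1) e])
    finally show "snd ?L (Comp (sem C) a b) = Comp K (snd ?L a) (snd ?L b)"
      using p q lift by simp
  qed
qed

lemma functor_pclass_path_interp:
  assumes "valid_catpres C" "is_functor (sem C) K G" "is_path C p"
  shows "snd G (pclass C p) = path_interp C K (fst G) (\<lambda>f. snd G (pclass C (fsrc C f, [f]))) p"
  using assms(1,3)
proof (induction rule: path_induct)
  case (Nil c)
  then show ?case using is_functorD(5)[OF assms(2)] by (simp add: sem_Id)
next
  case (Cons f fs)
  note single = is_path_single[OF assms(1) Cons.hyps(1)]
  have "Cod (sem C) (pclass C (fsrc C f, [f])) = Dom (sem C) (pclass C (ftgt C f, fs))"
    using sem_Dom_Cod[OF assms(1)] single Cons.hyps(2) by (simp add: path_end_def)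
  then have "snd G (pclass C (fsrc C f, f # fs)) =
      Comp K (snd G (pclass C (fsrc C f, [f]))) (snd G (pclass C (ftgt C f, fs)))"
    unfolding sem_Comp_Cons[OF assms(1) Cons.hyps(1,2)]
    using is_functorD(6)[OF assms(2)] pclass_in_sem_Ar single Cons.hyps(2) by blast
  then show ?case using Cons.IH by (simp add: path_interp_Cons)
qed

lemma apply_path_fst [simp]: "fst (apply_path Fs Ff p) = Fs (fst p)"
  by (simp add: apply_path_def)

lemma apply_path_Nil [simp]: "apply_path Fs Ff (c, []) = (Fs c, [])"
  by (simp add: apply_path_def)

lemma apply_path_Cons:
  "fst (Ff f) = Fs c \<Longrightarrow> apply_path Fs Ff (c, f # fs) = pcomp (Ff f) (apply_path Fs Ff (d, fs))"
  by (simp add: apply_path_def pcomp_def prod_eq_iff)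

lemma apply_path_single: "fst (Ff f) = Fs c \<Longrightarrow> apply_path Fs Ff (c, [f]) = Ff f"
  by (simp add: apply_path_def prod_eq_iff)

definition catpres_premorph ::
  "('s, 'f) catpres \<Rightarrow> ('s2, 'f2) catpres \<Rightarrow> ('s \<Rightarrow> 's2) \<Rightarrow> ('f \<Rightarrow> 's2 \<times> 'f2 list) \<Rightarrow> bool" where
  "catpres_premorph C C' Fs Ff \<longleftrightarrow> (\<forall>c\<in>Sorts C. Fs c \<in> Sorts C') \<and>
     (\<forall>f\<in>Funs C. is_path C' (Ff f) \<and> fst (Ff f) = Fs (fsrc C f) \<and>
                  path_end C' (Ff f) = Fs (ftgt C f))"

lemma catpres_morph_premorph: "catpres_morph C C' Fs Ff \<Longrightarrow> catpres_premorph C C' Fs Ff"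
  by (simp add: catpres_morph_def catpres_premorph_def)

lemma premorph_apply_path:
  assumes "valid_catpres C" "catpres_premorph C C' Fs Ff" "is_path C p"
  shows "is_path C' (apply_path Fs Ff p) \<and> path_end C' (apply_path Fs Ff p) = Fs (path_end C p)"
  using assms(1,3)
proof (induction rule: path_induct)
  case (Nil c)
  then show ?case using assms(2) by (simp add: catpres_premorph_def)
next
  case (Cons f fs)
  then have ff: "is_path C' (Ff f)" "fst (Ff f) = Fs (fsrc C f)" "path_end C' (Ff f) = Fs (ftgt C f)"
    using assms(2) by (auto simp: catpres_premorph_def)
  then have e: "path_end C' (Ff f) = fst (apply_path Fs Ff (ftgt C f, fs))" by simp
  show ?case
    using Cons ff is_path_pcomp[OF ff(1) _ e] path_end_pcomp[OF e]
    by (simp add: apply_path_Cons[of Ff f Fs "fsrc C f" fs "ftgt C f", OF ff(2)] path_end_Cons)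
qed

lemma path_interp_sem:
  assumes "valid_catpres C" "valid_catpres C'" "catpres_premorph C C' Fs Ff" "is_path C p"
  shows "path_interp C (sem C') Fs (\<lambda>f. pclass C' (Ff f)) p = pclass C' (apply_path Fs Ff p)"
  using assms(1,4)
proof (induction rule: path_induct)
  case (Nil c)
  then show ?case by (simp add: sem_Id)
next
  case (Cons f fs)
  then have ff: "is_path C' (Ff f)" "fst (Ff f) = Fs (fsrc C f)" "path_end C' (Ff f) = Fs (ftgt C f)"
    using assms(3) by (auto simp: catpres_premorph_def)
  then show ?case
    using Cons premorph_apply_path[OF assms(1,3) Cons.hyps(2)]
    by (simp add: path_interp_Cons apply_path_Cons[of Ff f Fs "fsrc C f" fs "ftgt C f", OF ff(2)]
        sem_Comp[OF assms(2)])
qed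

lemma premorph_is_interp:
  assumes "valid_catpres C'" "catpres_premorph C C' Fs Ff"
  shows "is_interp C (sem C') Fs (\<lambda>f. pclass C' (Ff f))"
  using assms sem_Dom_Cod[OF assms(1)] by (simp add: is_interp_def catpres_premorph_def pclass_in_sem_Ar)

lemma catpres_morph_is_model:
  assumes "valid_catpres C" "valid_catpres C'" "catpres_morph C C' Fs Ff"
  shows "is_model C (sem C') Fs (\<lambda>f. pclass C' (Ff f))"
proof -
  note pm = catpres_morph_premorph[OF assms(3)]
  have "path_interp C (sem C') Fs (\<lambda>f. pclass C' (Ff f)) p =
        path_interp C (sem C') Fs (\<lambda>f. pclass C' (Ff f)) q" if "(p, q) \<in> Eqs C" for p q
  proof -
    have "is_path C p" "is_path C q" using that assms(1) by (auto simp: valid_catpres_def)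
    moreover have "peq C' (apply_path Fs Ff p) (apply_path Fs Ff q)"
      using that assms(3) by (auto simp: catpres_morph_def)
    ultimately have "pclass C' (apply_path Fs Ff p) = pclass C' (apply_path Fs Ff q)"
      using premorph_apply_path[OF assms(1) pm] pclass_eq_iff by blast
    with \<open>is_path C p\<close> \<open>is_path C q\<close> show ?thesis
      by (simp add: path_interp_sem[OF assms(1,2) pm])
  qed
  then show ?thesis using premorph_is_interp[OF assms(2) pm] by (auto simp: is_model_def)
qed

lemma sem_morph_eq_sem_lift:
  assumes "valid_catpres C" "valid_catpres C'" "catpres_premorph C C' Fs Ff"
  shows "fun_eq_on (sem C) (sem_morph C' Fs Ff) (sem_lift C (sem C') Fs (\<lambda>f. pclass C' (Ff f)))"
  using path_interp_sem[OF assms] sem_rep[OF assms(1)]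
  by (simp add: fun_eq_on_def sem_morph_def sem_lift_def)

lemma sem_morph_functor:
  assumes "valid_catpres C" "valid_catpres C'" "catpres_morph C C' Fs Ff"
  shows "is_functor (sem C) (sem C') (sem_morph C' Fs Ff)"
proof (rule is_functor_cong[OF sem_category[OF assms(1)]])
  show "is_functor (sem C) (sem C') (sem_lift C (sem C') Fs (\<lambda>f. pclass C' (Ff f)))"
    by (rule sem_lift_functor[OF assms(1) sem_category[OF assms(2)] catpres_morph_is_model[OF assms]])
  show "fun_eq_on (sem C) (sem_lift C (sem C') Fs (\<lambda>f. pclass C' (Ff f))) (sem_morph C' Fs Ff)"
    using sem_morph_eq_sem_lift[OF assms(1,2) catpres_morph_premorph[OF assms(3)]]
    by (simp add: fun_eq_on_def)
qed

lemma sem_morph_pclass: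
  assumes "valid_catpres C" "valid_catpres C'" "catpres_morph C C' Fs Ff" "is_path C p"
  shows "snd (sem_morph C' Fs Ff) (pclass C p) = pclass C' (apply_path Fs Ff p)"
  using sem_morph_eq_sem_lift[OF assms(1,2) catpres_morph_premorph[OF assms(3)]]
    sem_lift_pclass[OF assms(1) sem_category[OF assms(2)] catpres_morph_is_model[OF assms(1-3)] assms(4)]
    path_interp_sem[OF assms(1,2) catpres_morph_premorph[OF assms(3)] assms(4)]
    pclass_in_sem_Ar[OF assms(4)]
  by (simp add: fun_eq_on_def)

lemma catpres_morph_peq:
  assumes "valid_catpres C" "valid_catpres C'" "catpres_morph C C' Fs Ff" "peq C p q"
  shows "peq C' (apply_path Fs Ff p) (apply_path Fs Ff q)"
proof -
  have p: "is_path C p" "is_path C q" using peq_parallel_paths[OF assms(1,4)] by simp_all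
  then have "pclass C p = pclass C q" using pclass_eq_iff assms(4) by blast
  then have "pclass C' (apply_path Fs Ff p) = pclass C' (apply_path Fs Ff q)"
    using sem_morph_pclass[OF assms(1-3) p(1)] sem_morph_pclass[OF assms(1-3) p(2)] by simp
  then show ?thesis
    using premorph_apply_path[OF assms(1) catpres_morph_premorph[OF assms(3)] p(1)] pclass_eq_iff
    by blast
qed

lemma catpres_equiv_apply_path:
  assumes "valid_catpres C" "valid_catpres C'" "catpres_premorph C C' Fs Ff" "catpres_premorph C C' Gs Gf"
    and "catpres_equiv C C' Fs Ff Gs Gf" "is_path C p"
  shows "pclass C' (apply_path Fs Ff p) = pclass C' (apply_path Gs Gf p)"
proof -
  have "path_interp C (sem C') Fs (\<lambda>f. pclass C' (Ff f)) p =
        path_interp C (sem C') Gs (\<lambda>f. pclass C' (Gf f)) p"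
  proof (rule path_interp_cong[OF assms(1,6)])
    fix f assume f: "f \<in> Funs C"
    have "is_path C' (Ff f)" using f assms(3) by (simp add: catpres_premorph_def)
    moreover have "peq C' (Ff f) (Gf f)" using f assms(5) by (simp add: catpres_equiv_def)
    ultimately show "pclass C' (Ff f) = pclass C' (Gf f)" using pclass_eq_iff by blast
  qed (use assms(5) in \<open>simp add: catpres_equiv_def\<close>)
  then show ?thesis
    unfolding path_interp_sem[OF assms(1,2,3,6)] path_interp_sem[OF assms(1,2,4,6)] .
qed

lemma functor_pclass_apply_path:
  assumes "valid_catpres C" "valid_catpres C'" "catpres_premorph C C' Fs Ff"
    and "is_functor (sem C) (sem C') G" "\<And>c. c \<in> Sorts C \<Longrightarrow> fst G c = Fs c"
    and "\<And>f. f \<in> Funs C \<Longrightarrow> snd G (pclass C (fsrc C f, [f])) = pclass C' (Ff f)"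
    and "is_path C p"
  shows "snd G (pclass C p) = pclass C' (apply_path Fs Ff p)"
proof -
  have "snd G (pclass C p) = path_interp C (sem C') (fst G) (\<lambda>f. snd G (pclass C (fsrc C f, [f]))) p"
    by (rule functor_pclass_path_interp[OF assms(1,4,7)])
  also have "\<dots> = path_interp C (sem C') Fs (\<lambda>f. pclass C' (Ff f)) p"
    by (rule path_interp_cong[OF assms(1,7)]) (simp_all add: assms(5,6))
  also have "\<dots> = pclass C' (apply_path Fs Ff p)"
    by (rule path_interp_sem[OF assms(1-3,7)])
  finally show ?thesis .
qed

lemma catpres_morph_if_functor:
  assumes "valid_catpres C" "valid_catpres C'" "catpres_premorph C C' Fs Ff"
    and "is_functor (sem C) (sem C') G" "\<And>c. c \<in> Sorts C \<Longrightarrow> fst G c = Fs c"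
    and "\<And>f. f \<in> Funs C \<Longrightarrow> snd G (pclass C (fsrc C f, [f])) = pclass C' (Ff f)"
  shows "catpres_morph C C' Fs Ff"
proof -
  have "peq C' (apply_path Fs Ff p) (apply_path Fs Ff q)" if "(p, q) \<in> Eqs C" for p q
  proof -
    have pq: "peq C p q" using that by (rule peq_ax)
    then have p: "is_path C p" "is_path C q" using peq_parallel_paths[OF assms(1)] by simp_all
    then have "pclass C p = pclass C q" using pclass_eq_iff pq by blast
    then have "pclass C' (apply_path Fs Ff p) = pclass C' (apply_path Fs Ff q)"
      using functor_pclass_apply_path[OF assms p(1)] functor_pclass_apply_path[OF assms p(2)] by simp
    then show ?thesis using premorph_apply_path[OF assms(1,3) p(1)] pclass_eq_iff by blast
  qed
  then show ?thesis using assms(3) by (auto simp: catpres_morph_def catpres_premorph_def)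
qed

lemma tot_simps:
  "Sorts (tot C D P) = Inl ` Sorts C \<union> Inr ` Sorts D"
  "fsrc (tot C D P) (Inl f) = Inl (fsrc C f)"
  "fsrc (tot C D P) (Inr (Inl x)) = Inl (usrc P x)"
  "fsrc (tot C D P) (Inr (Inr g)) = Inr (fsrc D g)"
  "ftgt (tot C D P) (Inl f) = Inl (ftgt C f)"
  "ftgt (tot C D P) (Inr (Inl x)) = Inr (utgt P x)"
  "ftgt (tot C D P) (Inr (Inr g)) = Inr (ftgt D g)"
  "Inl f \<in> Funs (tot C D P) \<longleftrightarrow> f \<in> Funs C"
  "Inr (Inl x) \<in> Funs (tot C D P) \<longleftrightarrow> x \<in> UFuns P"
  "Inr (Inr g) \<in> Funs (tot C D P) \<longleftrightarrow> g \<in> Funs D"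
  "Inl c \<in> Sorts (tot C D P) \<longleftrightarrow> c \<in> Sorts C"
  "Inr d \<in> Sorts (tot C D P) \<longleftrightarrow> d \<in> Sorts D"
  by (auto simp: tot_def)

lemma tot_Eqs:
  "Eqs (tot C D P) =
     (\<lambda>(p, q). (embC p, embC q)) ` Eqs C \<union> UEqs P \<union> (\<lambda>(p, q). (embD p, embD q)) ` Eqs D"
  by (simp add: tot_def)

lemma tot_Funs_cases:
  assumes "f \<in> Funs (tot C D P)"
  obtains (C) a where "f = Inl a" "a \<in> Funs C"
    | (P) x where "f = Inr (Inl x)" "x \<in> UFuns P"
    | (D) g where "f = Inr (Inr g)" "g \<in> Funs D"
  using assms by (auto simp: tot_def)

lemma is_chain_tot_Inl:
  "is_chain (fsrc (tot C D P)) (ftgt (tot C D P)) (Funs (tot C D P)) (Inl c) (map Inl fs)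
   \<longleftrightarrow> is_chain (fsrc C) (ftgt C) (Funs C) c fs"
  by (induction fs arbitrary: c) (auto simp: tot_simps)

lemma is_chain_tot_Inr:
  "is_chain (fsrc (tot C D P)) (ftgt (tot C D P)) (Funs (tot C D P)) (Inr c) (map (\<lambda>g. Inr (Inr g)) fs)
   \<longleftrightarrow> is_chain (fsrc D) (ftgt D) (Funs D) c fs"
  by (induction fs arbitrary: c) (auto simp: tot_simps)

lemma embC_simps:
  "is_path (tot C D P) (embC p) \<longleftrightarrow> is_path C p"
  "path_end (tot C D P) (embC p) = Inl (path_end C p)"
  "fst (embC p) = Inl (fst p)"
  "embC (pcomp p q) = pcomp (embC p) (embC q)"
  by (auto simp: embC_def is_path_def is_chain_tot_Inl tot_simps path_end_def last_map pcomp_def)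

lemma embD_simps:
  "is_path (tot C D P) (embD p) \<longleftrightarrow> is_path D p"
  "path_end (tot C D P) (embD p) = Inr (path_end D p)"
  "fst (embD p) = Inr (fst p)"
  "embD (pcomp p q) = pcomp (embD p) (embD q)"
  by (auto simp: embD_def is_path_def is_chain_tot_Inr tot_simps path_end_def last_map pcomp_def)

lemma map_projl_embC [simp]: "map projl (snd (embC r)) = snd r"
  by (simp add: embC_def comp_def)

lemma map_projr_embD [simp]: "map (\<lambda>g. projr (projr g)) (snd (embD r)) = snd r"
  by (simp add: embD_def comp_def)

lemma valid_tot:
  assumes "valid_catpres C" "valid_catpres D" "valid_unc C D P"
  shows "valid_catpres (tot C D P)"
proof -
  have "fsrc (tot C D P) f \<in> Sorts (tot C D P) \<and> ftgt (tot C D P) f \<in> Sorts (tot C D P)"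
    if "f \<in> Funs (tot C D P)" for f
    using that assms by (cases rule: tot_Funs_cases) (auto simp: tot_simps valid_catpres_def valid_unc_def)
  moreover have "is_path (tot C D P) p \<and> is_path (tot C D P) q \<and> parallel (tot C D P) p q"
    if "(p, q) \<in> Eqs (tot C D P)" for p q
    using that assms unfolding tot_Eqs
    by (auto simp: valid_catpres_def valid_unc_def embC_simps embD_simps parallel_def cross_path_def)
  ultimately show ?thesis by (auto simp: valid_catpres_def)
qed

lemma is_chain_tot_end_Inl:
  "is_chain (fsrc (tot C D P)) (ftgt (tot C D P)) (Funs (tot C D P)) c fs \<Longrightarrow>
   isl (if fs = [] then c else ftgt (tot C D P) (last fs)) \<Longrightarrow>
   isl c \<and> (\<exists>gs. fs = map Inl gs \<and> is_chain (fsrc C) (ftgt C) (Funs C) (projl c) gs)"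
proof (induction fs arbitrary: c)
  case (Cons f fs)
  then have f: "f \<in> Funs (tot C D P)" "fsrc (tot C D P) f = c" by auto
  have IH: "isl (ftgt (tot C D P) f) \<and>
      (\<exists>gs. fs = map Inl gs \<and> is_chain (fsrc C) (ftgt C) (Funs C) (projl (ftgt (tot C D P) f)) gs)"
    using Cons.IH[of "ftgt (tot C D P) f"] Cons.prems by (auto split: if_splits)
  from f(1) show ?case
  proof (cases rule: tot_Funs_cases)
    case (C a)
    then obtain gs where "fs = map Inl gs \<and> is_chain (fsrc C) (ftgt C) (Funs C) (ftgt C a) gs"
      using IH by (auto simp: tot_simps)
    then show ?thesis using C f by (auto simp: tot_simps intro!: exI[of _ "a # gs"])
  qed (use IH in \<open>auto simp: tot_simps\<close>)
qed simp

lemma is_chain_tot_start_Inr: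
  "is_chain (fsrc (tot C D P)) (ftgt (tot C D P)) (Funs (tot C D P)) c fs \<Longrightarrow> \<not> isl c \<Longrightarrow>
   (\<exists>gs. fs = map (\<lambda>g. Inr (Inr g)) gs \<and> is_chain (fsrc D) (ftgt D) (Funs D) (projr c) gs)"
proof (induction fs arbitrary: c)
  case (Cons f fs)
  then have f: "f \<in> Funs (tot C D P)" "fsrc (tot C D P) f = c" by auto
  from f(1) show ?case
  proof (cases rule: tot_Funs_cases)
    case (D g)
    then obtain gs where "fs = map (\<lambda>g. Inr (Inr g)) gs \<and> is_chain (fsrc D) (ftgt D) (Funs D) (ftgt D g) gs"
      using Cons.IH[of "ftgt (tot C D P) f"] Cons.prems by (auto simp: tot_simps)
    then show ?thesis using D f by (auto simp: tot_simps intro!: exI[of _ "g # gs"])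
  qed (use f Cons.prems in \<open>auto simp: tot_simps\<close>)
qed simp

lemma tot_path_end_Inl:
  assumes "is_path (tot C D P) p" "isl (path_end (tot C D P) p)"
  obtains r where "is_path C r" "p = embC r"
proof -
  obtain c fs where p: "p = (c, fs)" by (cases p)
  have ch: "is_chain (fsrc (tot C D P)) (ftgt (tot C D P)) (Funs (tot C D P)) c fs" "c \<in> Sorts (tot C D P)"
    using assms p by (auto simp: is_path_def)
  moreover have "isl (if fs = [] then c else ftgt (tot C D P) (last fs))"
    using assms(2) unfolding p path_end_def by (cases "fs = []") auto
  ultimately obtain gs where "isl c" "fs = map Inl gs" "is_chain (fsrc C) (ftgt C) (Funs C) (projl c) gs"
    using is_chain_tot_end_Inl by blast
  moreover have "projl c \<in> Sorts C" using \<open>isl c\<close> ch(2) by (cases c) (auto simp: tot_simps)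
  ultimately show ?thesis using p that[of "(projl c, gs)"] by (simp add: is_path_def embC_def)
qed

lemma tot_path_start_Inr:
  assumes "is_path (tot C D P) p" "\<not> isl (fst p)"
  obtains r where "is_path D r" "p = embD r"
proof -
  obtain c fs where p: "p = (c, fs)" by (cases p)
  have ch: "is_chain (fsrc (tot C D P)) (ftgt (tot C D P)) (Funs (tot C D P)) c fs" "c \<in> Sorts (tot C D P)"
    using assms p by (auto simp: is_path_def)
  then obtain gs where "fs = map (\<lambda>g. Inr (Inr g)) gs" "is_chain (fsrc D) (ftgt D) (Funs D) (projr c) gs"
    using is_chain_tot_start_Inr assms(2) p by fastforce
  moreover have "projr c \<in> Sorts D" "c = Inr (projr c)"
    using assms(2) p ch(2) by (cases c; auto simp: tot_simps)+
  ultimately show ?thesis using p that[of "(projr c, gs)"] by (simp add: is_path_def embD_def)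
qed

lemma tot_path_cases:
  assumes "is_path (tot C D P) p"
  obtains (C) r where "is_path C r" "p = embC r"
    | (D) r where "is_path D r" "p = embD r"
    | (cross) "cross_path C D P p"
  using assms tot_path_end_Inl tot_path_start_Inr by (metis cross_path_def)

lemma peq_tot_end_Inl:
  assumes "valid_catpres (tot C D P)" "peq (tot C D P) p q" "isl (path_end (tot C D P) p)"
  obtains r r' where "is_path C r" "is_path C r'" "p = embC r" "q = embC r'"
  using peq_parallel_paths[OF assms(1,2)] assms(3) tot_path_end_Inl by metis

lemma peq_tot_start_Inr:
  assumes "valid_catpres (tot C D P)" "peq (tot C D P) p q" "\<not> isl (fst p)"
  obtains r r' where "is_path D r" "is_path D r'" "p = embD r" "q = embD r'"
  using peq_parallel_paths[OF assms(1,2)] assms(3) tot_path_start_Inr by metis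

lemma tot_Eqs_end_Inl:
  assumes "valid_unc C D P" "(p, q) \<in> Eqs (tot C D P)" "isl (path_end (tot C D P) p)"
  obtains r r' where "(r, r') \<in> Eqs C" "p = embC r" "q = embC r'"
proof -
  from assms(2) consider (C) r r' where "(r, r') \<in> Eqs C" "p = embC r" "q = embC r'"
    | (P) "(p, q) \<in> UEqs P" | (D) r where "p = embD r"
    unfolding tot_Eqs by auto
  then show thesis
  proof cases
    case P
    then show ?thesis using assms(1,3) by (auto simp: valid_unc_def cross_path_def)
  next
    case D
    then show ?thesis using assms(3) by (simp add: embD_simps)
  qed (rule that)
qed

lemma tot_Eqs_start_Inr:
  assumes "valid_unc C D P" "(p, q) \<in> Eqs (tot C D P)" "\<not> isl (fst p)"
  obtains r r' where "(r, r') \<in> Eqs D" "p = embD r" "q = embD r'"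
proof -
  from assms(2) consider (C) r where "p = embC r" | (P) "(p, q) \<in> UEqs P"
    | (D) r r' where "(r, r') \<in> Eqs D" "p = embD r" "q = embD r'"
    unfolding tot_Eqs by auto
  then show thesis
  proof cases
    case C
    then show ?thesis using assms(3) by (simp add: embC_simps)
  next
    case P
    then show ?thesis using assms(1,3) by (auto simp: valid_unc_def cross_path_def)
  qed (rule that)
qed

lemma path_interp_embC:
  "path_interp (tot C D P) K ob ar (embC r) = path_interp C K (\<lambda>c. ob (Inl c)) (\<lambda>f. ar (Inl f)) r"
  by (simp add: path_interp_def embC_simps) (simp add: embC_def foldr_map comp_def)

lemma path_interp_embD:
  "path_interp (tot C D P) K ob ar (embD r) = path_interp D K (\<lambda>d. ob (Inr d)) (\<lambda>g. ar (Inr (Inr g))) r"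
  by (simp add: path_interp_def embD_simps) (simp add: embD_def foldr_map comp_def)

text \<open>Conservativity: |P| proves no new equations between paths of C or of D.\<close>

lemma peq_tot_embC_imp:
  fixes P :: "('c, 'd, 'cf, 'df, 'x) uncpres"
  assumes vT: "valid_catpres (tot C D P)" and vP: "valid_unc C D P"
  shows "peq (tot C D P) p q \<Longrightarrow> isl (path_end (tot C D P) p) \<Longrightarrow>
    peq C (projl (fst p), map projl (snd p)) (projl (fst q), map projl (snd q))"
proof (induction rule: peq.induct)
  case (peq_ax p q)
  then obtain r r' where "(r, r') \<in> Eqs C" "p = embC r" "q = embC r'"
    using tot_Eqs_end_Inl[OF vP] by blast
  then show ?case by (simp add: embC_def comp_def peq.peq_ax)
next
  case (peq_refl p)
  then show ?case by (auto elim!: tot_path_end_Inl simp: embC_def comp_def intro: peq.peq_refl)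
next
  case (peq_sym p q)
  then show ?case using peq_parallel_paths[OF vT peq_sym.hyps] by (auto intro: peq.peq_sym)
next
  case (peq_trans p q r)
  then show ?case using peq_parallel_paths[OF vT peq_trans.hyps(1)] by (auto intro: peq.peq_trans)
next
  case (peq_post p q f)
  from peq_post.hyps(2) show ?case
  proof (cases rule: tot_Funs_cases)
    case (C a)
    then have "path_end (tot C D P) p = Inl (fsrc C a)" using peq_post.hyps(3) by (simp add: tot_simps)
    then obtain r r' where r: "is_path C r" "is_path C r'" "p = embC r" "q = embC r'"
      using peq_tot_end_Inl[OF vT peq_post.hyps(1)] by (metis sum.disc(1))
    have "peq C r r'" "fsrc C a = path_end C r"
      using peq_post.IH r \<open>path_end (tot C D P) p = Inl (fsrc C a)\<close> by (simp_all add: embC_simps)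
    then have "peq C (fst r, snd r @ [a]) (fst r', snd r' @ [a])"
      using C by (intro peq.peq_post) simp_all
    then show ?thesis using r C by (simp add: embC_def comp_def)
  qed (use peq_post.prems in \<open>simp_all add: path_end_def tot_simps\<close>)
next
  case (peq_pre p q f)
  have "path_end (tot C D P) (fsrc (tot C D P) f, f # snd p) = path_end (tot C D P) p"
    using peq_pre.hyps(3) by (simp add: path_end_Cons)
  then have "isl (path_end (tot C D P) p)" using peq_pre.prems by simp
  moreover obtain r r' where r: "is_path C r" "is_path C r'" "p = embC r" "q = embC r'"
    using peq_tot_end_Inl[OF vT peq_pre.hyps(1)] calculation by metis
  ultimately have "peq C r r'" using peq_pre.IH by (simp add: embC_simps)
  from peq_pre.hyps(2) show ?case
  proof (cases rule: tot_Funs_cases)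
    case (C a)
    then have "peq C (fsrc C a, a # snd r) (fsrc C a, a # snd r')"
      using \<open>peq C r r'\<close> r peq_pre.hyps(3) by (intro peq.peq_pre) (simp_all add: embC_simps tot_simps)
    then show ?thesis using r C by (simp add: embC_def comp_def tot_simps)
  qed (use peq_pre.hyps(3) r in \<open>simp_all add: tot_simps embC_simps\<close>)
qed

lemma peq_tot_embD_imp:
  fixes P :: "('c, 'd, 'cf, 'df, 'x) uncpres"
  assumes vT: "valid_catpres (tot C D P)" and vP: "valid_unc C D P"
  shows "peq (tot C D P) p q \<Longrightarrow> \<not> isl (fst p) \<Longrightarrow>
    peq D (projr (fst p), map (\<lambda>g. projr (projr g)) (snd p))
      (projr (fst q), map (\<lambda>g. projr (projr g)) (snd q))"
proof (induction rule: peq.induct)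
  case (peq_ax p q)
  then obtain r r' where "(r, r') \<in> Eqs D" "p = embD r" "q = embD r'"
    using tot_Eqs_start_Inr[OF vP] by blast
  then show ?case by (simp add: embD_simps peq.peq_ax)
next
  case (peq_refl p)
  then show ?case by (auto elim!: tot_path_start_Inr simp: embD_simps intro: peq.peq_refl)
next
  case (peq_sym p q)
  then show ?case using peq_parallel_paths[OF vT peq_sym.hyps] by (auto intro: peq.peq_sym)
next
  case (peq_trans p q r)
  then show ?case using peq_parallel_paths[OF vT peq_trans.hyps(1)] by (auto intro: peq.peq_trans)
next
  case (peq_post p q f)
  then have "\<not> isl (fst p)" by simp
  moreover obtain r r' where r: "is_path D r" "is_path D r'" "p = embD r" "q = embD r'"
    using peq_tot_start_Inr[OF vT peq_post.hyps(1)] calculation by metis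
  ultimately have "peq D r r'" using peq_post.IH by (simp add: embD_simps)
  from peq_post.hyps(2) show ?case
  proof (cases rule: tot_Funs_cases)
    case (D g)
    then have "peq D (fst r, snd r @ [g]) (fst r', snd r' @ [g])"
      using \<open>peq D r r'\<close> r peq_post.hyps(3) by (intro peq.peq_post) (simp_all add: embD_simps tot_simps)
    then show ?thesis using r D by (simp add: embD_def comp_def)
  qed (use peq_post.hyps(3) r in \<open>simp_all add: tot_simps embD_simps\<close>)
next
  case (peq_pre p q f)
  from peq_pre.hyps(2) show ?case
  proof (cases rule: tot_Funs_cases)
    case (D g)
    then have "fst p = Inr (ftgt D g)" using peq_pre.hyps(3) by (simp add: tot_simps)
    then have "\<not> isl (fst p)" by simp
    moreover obtain r r' where r: "is_path D r" "is_path D r'" "p = embD r" "q = embD r'"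
      using peq_tot_start_Inr[OF vT peq_pre.hyps(1)] calculation by metis
    ultimately have "peq D r r'" using peq_pre.IH by (simp add: embD_simps)
    then have "peq D (fsrc D g, g # snd r) (fsrc D g, g # snd r')"
      using D r peq_pre.hyps(3) by (intro peq.peq_pre) (simp_all add: embD_simps tot_simps)
    then show ?thesis using r D by (simp add: embD_def comp_def tot_simps)
  qed (use peq_pre.prems in \<open>simp_all add: tot_simps\<close>)
qed

section \<open>The profunctor [[P]]\<close>

definition embCf :: "('c, 'cf) catpres \<Rightarrow> 'cf \<Rightarrow> ('c + 'd) \<times> ('cf + 'x + 'df) list" where
  "embCf C f = (Inl (fsrc C f), [Inl f])"

definition embDf :: "('d, 'df) catpres \<Rightarrow> 'df \<Rightarrow> ('c + 'd) \<times> ('cf + 'x + 'df) list" where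
  "embDf D g = (Inr (fsrc D g), [Inr (Inr g)])"

lemma apply_path_embCf: "apply_path Inl (embCf C) r = embC r"
  by (simp add: apply_path_def embCf_def embC_def map_concat concat_map_singleton comp_def)

lemma apply_path_embDf: "apply_path Inr (embDf D) r = embD r"
  by (simp add: apply_path_def embDf_def embD_def map_concat concat_map_singleton comp_def)

lemma catpres_morph_embCf:
  assumes "valid_catpres C"
  shows "catpres_morph C (tot C D P) Inl (embCf C)"
  using assms unfolding catpres_morph_def apply_path_embCf
  by (force simp: embCf_def is_path_def tot_simps valid_catpres_def tot_Eqs intro: peq_ax)

lemma catpres_morph_embDf:
  assumes "valid_catpres D"
  shows "catpres_morph D (tot C D P) Inr (embDf D)"
  using assms unfolding catpres_morph_def apply_path_embDf
  by (force simp: embDf_def is_path_def tot_simps valid_catpres_def tot_Eqs intro: peq_ax)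

lemma peq_tot_embC_iff:
  assumes "valid_catpres C" "valid_catpres D" "valid_unc C D P"
  shows "peq (tot C D P) (embC p) (embC q) \<longleftrightarrow> peq C p q"
  using peq_tot_embC_imp[OF valid_tot[OF assms] assms(3), of "embC p" "embC q"]
    catpres_morph_peq[OF assms(1) valid_tot[OF assms] catpres_morph_embCf[OF assms(1)], of p q]
  by (auto simp: embC_simps apply_path_embCf)

lemma peq_tot_embD_iff:
  assumes "valid_catpres C" "valid_catpres D" "valid_unc C D P"
  shows "peq (tot C D P) (embD p) (embD q) \<longleftrightarrow> peq D p q"
  using peq_tot_embD_imp[OF valid_tot[OF assms] assms(3), of "embD p" "embD q"]
    catpres_morph_peq[OF assms(2) valid_tot[OF assms] catpres_morph_embDf[OF assms(2)], of p q]
  by (auto simp: embD_simps apply_path_embDf)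

lemma sem_unc_simps:
  "pcat (sem_unc C D P) = sem (tot C D P)"
  "pi_ob (sem_unc C D P) = (\<lambda>s. \<not> isl s)"
  "pi_ar (sem_unc C D P) = (\<lambda>X. (\<not> isl (Dom (sem (tot C D P)) X), \<not> isl (Cod (sem (tot C D P)) X)))"
  "in0_ob (sem_unc C D P) = Inl"
  "in1_ob (sem_unc C D P) = Inr"
  by (simp_all add: sem_unc_def)

lemma sem_unc_in0: "(in0_ob (sem_unc C D P), in0_ar (sem_unc C D P)) = sem_morph (tot C D P) Inl (embCf C)"
  by (simp add: sem_unc_def sem_morph_def apply_path_embCf fun_eq_iff)

lemma sem_unc_in1: "(in1_ob (sem_unc C D P), in1_ar (sem_unc C D P)) = sem_morph (tot C D P) Inr (embDf D)"
  by (simp add: sem_unc_def sem_morph_def apply_path_embDf fun_eq_iff)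

lemma in0_ar_pclass:
  assumes "valid_catpres C" "valid_catpres D" "valid_unc C D P" "is_path C r"
  shows "in0_ar (sem_unc C D P) (pclass C r) = pclass (tot C D P) (embC r)"
  using sem_morph_pclass[OF assms(1) valid_tot[OF assms(1-3)] catpres_morph_embCf[OF assms(1)] assms(4)]
    sem_unc_in0[of C D P] by (metis apply_path_embCf snd_conv)

lemma in1_ar_pclass:
  assumes "valid_catpres C" "valid_catpres D" "valid_unc C D P" "is_path D r"
  shows "in1_ar (sem_unc C D P) (pclass D r) = pclass (tot C D P) (embD r)"
  using sem_morph_pclass[OF assms(2) valid_tot[OF assms(1-3)] catpres_morph_embDf[OF assms(2)] assms(4)]
    sem_unc_in1[of C D P] by (metis apply_path_embDf snd_conv)

lemma sem_unc_pi_functor: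
  assumes "valid_catpres C" "valid_catpres D" "valid_unc C D P"
  shows "is_functor (pcat (sem_unc C D P)) cat_two (pi_ob (sem_unc C D P), pi_ar (sem_unc C D P))"
  unfolding sem_unc_simps
proof (rule functor_to_cat_two[OF sem_category[OF valid_tot[OF assms]]])
  fix a assume "a \<in> Ar (sem (tot C D P))"
  then obtain p where p: "is_path (tot C D P) p" "a = pclass (tot C D P) p" by (rule sem_ArE)
  have "\<not> isl (path_end (tot C D P) p)" if "\<not> isl (fst p)"
    using tot_path_start_Inr[OF p(1) that] by (metis embD_simps(2) sum.disc(2))
  then show "(\<not> isl (Dom (sem (tot C D P)) a)) \<le> (\<not> isl (Cod (sem (tot C D P)) a))"
    using p sem_Dom_Cod[OF valid_tot[OF assms] p(1)] by auto
qed

lemma in0_ar_pclass_iff: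
  assumes "valid_catpres C" "valid_catpres D" "valid_unc C D P" "is_path (tot C D P) p"
  shows "pclass (tot C D P) p \<in> in0_ar (sem_unc C D P) ` Ar (sem C) \<longleftrightarrow> isl (path_end (tot C D P) p)"
proof
  note vT = valid_tot[OF assms(1-3)]
  assume "pclass (tot C D P) p \<in> in0_ar (sem_unc C D P) ` Ar (sem C)"
  then obtain X where X: "X \<in> Ar (sem C)" "pclass (tot C D P) p = in0_ar (sem_unc C D P) X" by blast
  from X(1) obtain r where r: "is_path C r" "X = pclass C r" by (rule sem_ArE)
  have "peq (tot C D P) p (embC r)"
    using X(2) r in0_ar_pclass[OF assms(1-3)] pclass_eq_iff[OF assms(4)] by simp
  from peq_parallel_paths[OF vT this] show "isl (path_end (tot C D P) p)" by (simp add: embC_simps)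
next
  assume "isl (path_end (tot C D P) p)"
  then obtain r where "is_path C r" "p = embC r" using tot_path_end_Inl assms(4) by blast
  then show "pclass (tot C D P) p \<in> in0_ar (sem_unc C D P) ` Ar (sem C)"
    using in0_ar_pclass[OF assms(1-3)] pclass_in_sem_Ar by (metis image_eqI)
qed

lemma in1_ar_pclass_iff:
  assumes "valid_catpres C" "valid_catpres D" "valid_unc C D P" "is_path (tot C D P) p"
  shows "pclass (tot C D P) p \<in> in1_ar (sem_unc C D P) ` Ar (sem D) \<longleftrightarrow> \<not> isl (fst p)"
proof
  note vT = valid_tot[OF assms(1-3)]
  assume "pclass (tot C D P) p \<in> in1_ar (sem_unc C D P) ` Ar (sem D)"
  then obtain X where X: "X \<in> Ar (sem D)" "pclass (tot C D P) p = in1_ar (sem_unc C D P) X" by blast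
  from X(1) obtain r where r: "is_path D r" "X = pclass D r" by (rule sem_ArE)
  have "peq (tot C D P) p (embD r)"
    using X(2) r in1_ar_pclass[OF assms(1-3)] pclass_eq_iff[OF assms(4)] by simp
  from peq_parallel_paths[OF vT this] show "\<not> isl (fst p)" by (simp add: embD_simps)
next
  assume "\<not> isl (fst p)"
  then obtain r where "is_path D r" "p = embD r" using tot_path_start_Inr assms(4) by blast
  then show "pclass (tot C D P) p \<in> in1_ar (sem_unc C D P) ` Ar (sem D)"
    using in1_ar_pclass[OF assms(1-3)] pclass_in_sem_Ar by (metis image_eqI)
qed

lemma in0_ar_image:
  assumes "valid_catpres C" "valid_catpres D" "valid_unc C D P"
  shows "in0_ar (sem_unc C D P) ` Ar (sem C) =
    {a \<in> Ar (pcat (sem_unc C D P)). pi_ar (sem_unc C D P) a = (False, False)}"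
proof (intro equalityI subsetI)
  fix X assume X: "X \<in> in0_ar (sem_unc C D P) ` Ar (sem C)"
  then obtain r where r: "is_path C r" "X = pclass (tot C D P) (embC r)"
    by (auto elim!: sem_ArE simp: in0_ar_pclass[OF assms])
  moreover have "pclass (tot C D P) (embC r) \<in> Ar (sem (tot C D P))"
    using r(1) by (intro pclass_in_sem_Ar) (simp add: embC_simps)
  ultimately show "X \<in> {a \<in> Ar (pcat (sem_unc C D P)). pi_ar (sem_unc C D P) a = (False, False)}"
    using sem_Dom_Cod[OF valid_tot[OF assms]] by (simp add: sem_unc_simps embC_simps)
next
  fix X assume "X \<in> {a \<in> Ar (pcat (sem_unc C D P)). pi_ar (sem_unc C D P) a = (False, False)}"
  then obtain p where "is_path (tot C D P) p" "X = pclass (tot C D P) p" "isl (path_end (tot C D P) p)"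
    using sem_Dom_Cod[OF valid_tot[OF assms]] by (auto elim!: sem_ArE simp: sem_unc_simps)
  then show "X \<in> in0_ar (sem_unc C D P) ` Ar (sem C)" using in0_ar_pclass_iff[OF assms] by blast
qed

lemma in1_ar_image:
  assumes "valid_catpres C" "valid_catpres D" "valid_unc C D P"
  shows "in1_ar (sem_unc C D P) ` Ar (sem D) =
    {a \<in> Ar (pcat (sem_unc C D P)). pi_ar (sem_unc C D P) a = (True, True)}"
proof (intro equalityI subsetI)
  fix X assume X: "X \<in> in1_ar (sem_unc C D P) ` Ar (sem D)"
  then obtain r where r: "is_path D r" "X = pclass (tot C D P) (embD r)"
    by (auto elim!: sem_ArE simp: in1_ar_pclass[OF assms])
  moreover have "pclass (tot C D P) (embD r) \<in> Ar (sem (tot C D P))"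
    using r(1) by (intro pclass_in_sem_Ar) (simp add: embD_simps)
  ultimately show "X \<in> {a \<in> Ar (pcat (sem_unc C D P)). pi_ar (sem_unc C D P) a = (True, True)}"
    using sem_Dom_Cod[OF valid_tot[OF assms]] by (simp add: sem_unc_simps embD_simps)
next
  fix X assume "X \<in> {a \<in> Ar (pcat (sem_unc C D P)). pi_ar (sem_unc C D P) a = (True, True)}"
  then obtain p where "is_path (tot C D P) p" "X = pclass (tot C D P) p" "\<not> isl (fst p)"
    using sem_Dom_Cod[OF valid_tot[OF assms]] by (auto elim!: sem_ArE simp: sem_unc_simps)
  then show "X \<in> in1_ar (sem_unc C D P) ` Ar (sem D)" using in1_ar_pclass_iff[OF assms] by blast
qed

lemma inj_on_in0_ar:
  assumes "valid_catpres C" "valid_catpres D" "valid_unc C D P"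
  shows "inj_on (in0_ar (sem_unc C D P)) (Ar (sem C))"
proof (rule inj_onI)
  fix X Y assume "X \<in> Ar (sem C)" "Y \<in> Ar (sem C)" "in0_ar (sem_unc C D P) X = in0_ar (sem_unc C D P) Y"
  then obtain p q where p: "is_path C p" "X = pclass C p" "Y = pclass C q"
    and eq: "pclass (tot C D P) (embC p) = pclass (tot C D P) (embC q)"
    by (auto elim!: sem_ArE simp: in0_ar_pclass[OF assms])
  have "is_path (tot C D P) (embC p)" using p(1) by (simp add: embC_simps)
  then have "peq C p q" using eq pclass_eq_iff peq_tot_embC_iff[OF assms] by blast
  then show "X = Y" using p pclass_eq_iff by blast
qed

lemma inj_on_in1_ar:
  assumes "valid_catpres C" "valid_catpres D" "valid_unc C D P"
  shows "inj_on (in1_ar (sem_unc C D P)) (Ar (sem D))"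
proof (rule inj_onI)
  fix X Y assume "X \<in> Ar (sem D)" "Y \<in> Ar (sem D)" "in1_ar (sem_unc C D P) X = in1_ar (sem_unc C D P) Y"
  then obtain p q where p: "is_path D p" "X = pclass D p" "Y = pclass D q"
    and eq: "pclass (tot C D P) (embD p) = pclass (tot C D P) (embD q)"
    by (auto elim!: sem_ArE simp: in1_ar_pclass[OF assms])
  have "is_path (tot C D P) (embD p)" using p(1) by (simp add: embD_simps)
  then have "peq D p q" using eq pclass_eq_iff peq_tot_embD_iff[OF assms] by blast
  then show "X = Y" using p pclass_eq_iff by blast
qed

lemma sem_unc_is_profunctor:
  assumes "valid_catpres C" "valid_catpres D" "valid_unc C D P"
  shows "is_profunctor (sem C) (sem D) (sem_unc C D P)"
proof -
  note vT = valid_tot[OF assms]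
  have "is_functor (sem C) (pcat (sem_unc C D P)) (in0_ob (sem_unc C D P), in0_ar (sem_unc C D P))"
    using sem_morph_functor[OF assms(1) vT catpres_morph_embCf[OF assms(1)]]
    by (simp only: sem_unc_in0 sem_unc_simps(1))
  moreover have "is_functor (sem D) (pcat (sem_unc C D P)) (in1_ob (sem_unc C D P), in1_ar (sem_unc C D P))"
    using sem_morph_functor[OF assms(2) vT catpres_morph_embDf[OF assms(2)]]
    by (simp only: sem_unc_in1 sem_unc_simps(1))
  moreover have "in0_ob (sem_unc C D P) ` Ob (sem C) =
      {ob \<in> Ob (pcat (sem_unc C D P)). pi_ob (sem_unc C D P) ob = False}"
    "in1_ob (sem_unc C D P) ` Ob (sem D) =
      {ob \<in> Ob (pcat (sem_unc C D P)). pi_ob (sem_unc C D P) ob = True}"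
    "inj_on (in0_ob (sem_unc C D P)) (Ob (sem C))" "inj_on (in1_ob (sem_unc C D P)) (Ob (sem D))"
    by (auto simp: sem_unc_simps tot_simps)
  moreover have "is_category (pcat (sem_unc C D P))"
    using sem_category[OF vT] by (simp add: sem_unc_simps)
  ultimately show ?thesis
    unfolding is_profunctor_def
    using sem_category[OF assms(1)] sem_category[OF assms(2)] sem_unc_pi_functor[OF assms]
      in0_ar_image[OF assms] in1_ar_image[OF assms] inj_on_in0_ar[OF assms] inj_on_in1_ar[OF assms]
    by (intro conjI) assumption+
qed

section \<open>The functor [[-]] on morphisms\<close>

lemma apply_path_totF_embC: "apply_path (\<lambda>s. s) (totF C D F) (embC r) = embC r"
  by (simp add: apply_path_def totF_def embC_def comp_def map_concat concat_map_singleton)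

lemma apply_path_totF_embD: "apply_path (\<lambda>s. s) (totF C D F) (embD r) = embD r"
  by (simp add: apply_path_def totF_def embD_def comp_def map_concat concat_map_singleton)

lemma sem_unc_morph_pclass:
  assumes "valid_catpres C" "valid_catpres D" "valid_unc C D P" "valid_unc C D P'"
    and "unc_morph C D P P' F" "is_path (tot C D P) p"
  shows "snd (sem_unc_morph C D P' F) (pclass (tot C D P) p) =
    pclass (tot C D P') (apply_path (\<lambda>s. s) (totF C D F) p)"
  using sem_morph_pclass[OF valid_tot[OF assms(1-3)] valid_tot[OF assms(1,2,4)] _ assms(6)] assms(5)
  by (simp add: sem_unc_morph_def unc_morph_def)

lemma sem_unc_morph_prof_morph:
  assumes "valid_catpres C" "valid_catpres D" "valid_unc C D P" "valid_unc C D P'"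
    and "unc_morph C D P P' F"
  shows "prof_morph (sem C) (sem D) (sem_unc C D P) (sem_unc C D P') (sem_unc_morph C D P' F)"
  unfolding prof_morph_def
proof (intro conjI ballI)
  have "catpres_morph (tot C D P) (tot C D P') (\<lambda>s. s) (totF C D F)"
    using assms(5) by (simp add: unc_morph_def)
  then show F: "is_functor (pcat (sem_unc C D P)) (pcat (sem_unc C D P')) (sem_unc_morph C D P' F)"
    unfolding sem_unc_simps sem_unc_morph_def
    by (rule sem_morph_functor[OF valid_tot[OF assms(1-3)] valid_tot[OF assms(1,2,4)]])
  fix a assume "a \<in> Ar (pcat (sem_unc C D P))"
  then show "pi_ar (sem_unc C D P') (snd (sem_unc_morph C D P' F) a) = pi_ar (sem_unc C D P) a"
    using is_functorD(3,4)[OF F] by (simp add: sem_unc_simps sem_unc_morph_def sem_morph_def)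
next
  fix a assume "a \<in> Ar (sem C)"
  then obtain r where "is_path C r" "a = pclass C r" by (rule sem_ArE)
  moreover have "is_path (tot C D P) (embC r)" using \<open>is_path C r\<close> by (simp add: embC_simps)
  ultimately show "snd (sem_unc_morph C D P' F) (in0_ar (sem_unc C D P) a) = in0_ar (sem_unc C D P') a"
    using in0_ar_pclass[OF assms(1-3)] in0_ar_pclass[OF assms(1,2,4)] sem_unc_morph_pclass[OF assms]
    by (simp add: apply_path_totF_embC)
next
  fix a assume "a \<in> Ar (sem D)"
  then obtain r where "is_path D r" "a = pclass D r" by (rule sem_ArE)
  moreover have "is_path (tot C D P) (embD r)" using \<open>is_path D r\<close> by (simp add: embD_simps)
  ultimately show "snd (sem_unc_morph C D P' F) (in1_ar (sem_unc C D P) a) = in1_ar (sem_unc C D P') a"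
    using in1_ar_pclass[OF assms(1-3)] in1_ar_pclass[OF assms(1,2,4)] sem_unc_morph_pclass[OF assms]
    by (simp add: apply_path_totF_embD)
qed (simp_all add: sem_unc_simps sem_unc_morph_def sem_morph_def)

lemma sem_unc_morph_cong:
  assumes "valid_catpres C" "valid_catpres D" "valid_unc C D P" "valid_unc C D P'"
    and "unc_morph C D P P' F" "unc_morph C D P P' F'" "unc_equiv C D P P' F F'"
  shows "fun_eq_on (pcat (sem_unc C D P)) (sem_unc_morph C D P' F) (sem_unc_morph C D P' F')"
  unfolding fun_eq_on_def
proof (intro conjI ballI)
  fix a assume "a \<in> Ar (pcat (sem_unc C D P))"
  then obtain p where p: "is_path (tot C D P) p" "a = pclass (tot C D P) p"
    by (auto elim: sem_ArE simp: sem_unc_simps)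
  then show "snd (sem_unc_morph C D P' F) a = snd (sem_unc_morph C D P' F') a"
    using catpres_equiv_apply_path[OF valid_tot[OF assms(1-3)] valid_tot[OF assms(1,2,4)]]
      assms(5-7) sem_unc_morph_pclass[OF assms(1-4)]
    by (simp add: unc_morph_def unc_equiv_def catpres_morph_premorph)
qed (simp add: sem_unc_morph_def sem_morph_def)

lemma sem_unc_morph_id:
  assumes "valid_catpres C" "valid_catpres D" "valid_unc C D P"
  shows "fun_eq_on (pcat (sem_unc C D P)) (sem_unc_morph C D P (unc_id P)) (\<lambda>ob. ob, \<lambda>a. a)"
proof -
  have "snd (totF C D (unc_id P) f) = [f]" for f
    by (simp add: totF_def unc_id_def split: sum.split)
  then have "apply_path (\<lambda>s. s) (totF C D (unc_id P)) p = p" for p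
    by (simp add: apply_path_def)
  then show ?thesis
    using sem_rep[OF valid_tot[OF assms]]
    by (simp add: fun_eq_on_def sem_unc_simps sem_unc_morph_def sem_morph_def)
qed

lemma apply_path_unc_comp:
  "apply_path (\<lambda>s. s) (totF C D (unc_comp C D G F)) p =
   apply_path (\<lambda>s. s) (totF C D G) (apply_path (\<lambda>s. s) (totF C D F) p)"
proof -
  have "concat (map (\<lambda>f. snd (totF C D (unc_comp C D G F) f)) fs) =
    concat (map (\<lambda>f. snd (totF C D G f)) (concat (map (\<lambda>f. snd (totF C D F f)) fs)))" for fs
    by (induction fs) (simp_all add: totF_def unc_comp_def apply_path_def split: sum.split)
  then show ?thesis by (simp add: apply_path_def)
qed

lemma sem_unc_morph_comp:
  assumes "valid_catpres C" "valid_catpres D" "valid_unc C D P" "valid_unc C D P'" "valid_unc C D P''"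
    and "unc_morph C D P P' F" "unc_morph C D P' P'' G"
  shows "fun_eq_on (pcat (sem_unc C D P)) (sem_unc_morph C D P'' (unc_comp C D G F))
          (fun_comp (sem_unc_morph C D P'' G) (sem_unc_morph C D P' F))"
  unfolding fun_eq_on_def
proof (intro conjI ballI)
  fix a assume "a \<in> Ar (pcat (sem_unc C D P))"
  then have r: "is_path (tot C D P) (rep a)" "pclass (tot C D P) (rep a) = a"
    using sem_rep[OF valid_tot[OF assms(1-3)]] by (simp_all add: sem_unc_simps)
  have "catpres_premorph (tot C D P) (tot C D P') (\<lambda>s. s) (totF C D F)"
    using assms(6) by (simp add: unc_morph_def catpres_morph_premorph)
  from premorph_apply_path[OF valid_tot[OF assms(1-3)] this r(1)]
  have "is_path (tot C D P') (apply_path (\<lambda>s. s) (totF C D F) (rep a))" by simp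
  then show "snd (sem_unc_morph C D P'' (unc_comp C D G F)) a =
    snd (fun_comp (sem_unc_morph C D P'' G) (sem_unc_morph C D P' F)) a"
    using sem_unc_morph_pclass[OF assms(1-4,6) r(1)] sem_unc_morph_pclass[OF assms(1,2,4,5,7)] r(2)
    by (simp add: fun_comp_def sem_unc_morph_def sem_morph_def apply_path_unc_comp)
qed (simp add: sem_unc_morph_def sem_morph_def fun_comp_def)

lemma sem_unc_morph_faithful:
  assumes "valid_catpres C" "valid_catpres D" "valid_unc C D P" "valid_unc C D P'"
    and "unc_morph C D P P' F" "unc_morph C D P P' F'"
    and "fun_eq_on (pcat (sem_unc C D P)) (sem_unc_morph C D P' F) (sem_unc_morph C D P' F')"
  shows "unc_equiv C D P P' F F'"
  unfolding unc_equiv_def catpres_equiv_def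
proof (intro conjI ballI)
  fix f assume f: "f \<in> Funs (tot C D P)"
  note single = is_path_single[OF valid_tot[OF assms(1-3)] f]
  have m: "is_path (tot C D P') (totF C D F f)" "fst (totF C D F f) = fsrc (tot C D P) f"
    "fst (totF C D F' f) = fsrc (tot C D P) f"
    using assms(5,6) f by (auto simp: unc_morph_def catpres_morph_def)
  have "pclass (tot C D P') (totF C D F f) = pclass (tot C D P') (totF C D F' f)"
    using assms(7) pclass_in_sem_Ar[OF single] sem_unc_morph_pclass[OF assms(1-5) single]
      sem_unc_morph_pclass[OF assms(1-4,6) single]
    by (simp add: fun_eq_on_def sem_unc_simps apply_path_single[of "totF C D F" f "\<lambda>s. s", OF m(2)]
        apply_path_single[of "totF C D F'" f "\<lambda>s. s", OF m(3)])
  then show "peq (tot C D P') (totF C D F f) (totF C D F' f)" using pclass_eq_iff[OF m(1)] by blast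
qed simp

lemma prof_morph_sem_unc_Sorts:
  assumes "prof_morph (sem C) (sem D) (sem_unc C D P) (sem_unc C D P') G" "s \<in> Sorts (tot C D P)"
  shows "fst G s = s"
  using assms by (auto simp: prof_morph_def sem_unc_simps tot_simps)

lemma prof_morph_pclass_embC:
  assumes "valid_catpres C" "valid_catpres D" "valid_unc C D P" "valid_unc C D P'"
    and "prof_morph (sem C) (sem D) (sem_unc C D P) (sem_unc C D P') G" "is_path C r"
  shows "snd G (pclass (tot C D P) (embC r)) = pclass (tot C D P') (embC r)"
proof -
  have "snd G (in0_ar (sem_unc C D P) (pclass C r)) = in0_ar (sem_unc C D P') (pclass C r)"
    using assms(5) pclass_in_sem_Ar[OF assms(6)] by (simp add: prof_morph_def)
  then show ?thesis using in0_ar_pclass[OF assms(1-3,6)] in0_ar_pclass[OF assms(1,2,4,6)] by simp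
qed

lemma prof_morph_pclass_embD:
  assumes "valid_catpres C" "valid_catpres D" "valid_unc C D P" "valid_unc C D P'"
    and "prof_morph (sem C) (sem D) (sem_unc C D P) (sem_unc C D P') G" "is_path D r"
  shows "snd G (pclass (tot C D P) (embD r)) = pclass (tot C D P') (embD r)"
proof -
  have "snd G (in1_ar (sem_unc C D P) (pclass D r)) = in1_ar (sem_unc C D P') (pclass D r)"
    using assms(5) pclass_in_sem_Ar[OF assms(6)] by (simp add: prof_morph_def)
  then show ?thesis using in1_ar_pclass[OF assms(1-3,6)] in1_ar_pclass[OF assms(1,2,4,6)] by simp
qed

text \<open>On a profunctor symbol x, G is realized by a representative path of the image of x.\<close>

lemma prof_morph_on_generators:
  assumes "valid_catpres C" "valid_catpres D" "valid_unc C D P" "valid_unc C D P'"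
    and G: "prof_morph (sem C) (sem D) (sem_unc C D P) (sem_unc C D P') G"
    and F_def: "\<And>x. F x = rep (snd G (pclass (tot C D P) (Inl (usrc P x), [Inr (Inl x)])))"
    and f: "f \<in> Funs (tot C D P)"
  shows "snd G (pclass (tot C D P) (fsrc (tot C D P) f, [f])) = pclass (tot C D P') (totF C D F f)"
    "is_path (tot C D P') (totF C D F f)" "fst (totF C D F f) = fsrc (tot C D P) f"
    "path_end (tot C D P') (totF C D F f) = ftgt (tot C D P) f"
proof -
  let ?T = "tot C D P" and ?T' = "tot C D P'"
  note vT = valid_tot[OF assms(1-3)] and vT' = valid_tot[OF assms(1,2,4)]
  have "snd G (pclass ?T (fsrc ?T f, [f])) = pclass ?T' (totF C D F f) \<and>
     is_path ?T' (totF C D F f) \<and> fst (totF C D F f) = fsrc ?T f \<and> path_end ?T' (totF C D F f) = ftgt ?T f"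
    using f
  proof (cases rule: tot_Funs_cases)
    case (C a)
    have r: "is_path C (fsrc C a, [a])" by (rule is_path_single[OF assms(1) C(2)])
    have e: "totF C D F f = embC (fsrc C a, [a])" "(fsrc ?T f, [f]) = embC (fsrc C a, [a])"
      using C by (simp_all add: totF_def embC_def tot_simps)
    show ?thesis unfolding e
      using prof_morph_pclass_embC[OF assms(1-4) G r] r C by (simp add: embC_simps tot_simps)
  next
    case (D g)
    have r: "is_path D (fsrc D g, [g])" by (rule is_path_single[OF assms(2) D(2)])
    have e: "totF C D F f = embD (fsrc D g, [g])" "(fsrc ?T f, [f]) = embD (fsrc D g, [g])"
      using D by (simp_all add: totF_def embD_def tot_simps)
    show ?thesis unfolding e
      using prof_morph_pclass_embD[OF assms(1-4) G r] r D by (simp add: embD_simps tot_simps)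
  next
    case (P x)
    let ?X = "pclass ?T (fsrc ?T f, [f])"
    have X: "?X \<in> Ar (sem ?T)" "Dom (sem ?T) ?X = Inl (usrc P x)" "Cod (sem ?T) ?X = Inr (utgt P x)"
      using pclass_in_sem_Ar sem_Dom_Cod[OF vT] is_path_single[OF vT f] P by (simp_all add: tot_simps)
    have "is_functor (sem ?T) (sem ?T') G" using G by (simp add: prof_morph_def sem_unc_simps)
    then have GX: "snd G ?X \<in> Ar (sem ?T')" "Dom (sem ?T') (snd G ?X) = fst G (Inl (usrc P x))"
      "Cod (sem ?T') (snd G ?X) = fst G (Inr (utgt P x))"
      using is_functorD(2-4) X by metis+
    have "fst G (Inl (usrc P x)) = Inl (usrc P x)" "fst G (Inr (utgt P x)) = Inr (utgt P x)"
      using prof_morph_sem_unc_Sorts[OF G] assms(3) P(2) by (simp_all add: valid_unc_def tot_simps)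
    moreover have "F x = rep (snd G ?X)" "totF C D F f = F x" using P by (simp_all add: F_def tot_simps totF_def)
    ultimately show ?thesis
      using GX sem_rep[OF vT' GX(1)] P by (simp add: sem_def tot_simps)
  qed
  then show "snd G (pclass ?T (fsrc ?T f, [f])) = pclass ?T' (totF C D F f)"
    "is_path ?T' (totF C D F f)" "fst (totF C D F f) = fsrc ?T f"
    "path_end ?T' (totF C D F f) = ftgt ?T f" by simp_all
qed

lemma sem_unc_morph_full:
  assumes "valid_catpres C" "valid_catpres D" "valid_unc C D P" "valid_unc C D P'"
    and G: "prof_morph (sem C) (sem D) (sem_unc C D P) (sem_unc C D P') G"
  shows "\<exists>F. unc_morph C D P P' F \<and> fun_eq_on (pcat (sem_unc C D P)) (sem_unc_morph C D P' F) G"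
proof -
  let ?T = "tot C D P" and ?T' = "tot C D P'"
  note vT = valid_tot[OF assms(1-3)] and vT' = valid_tot[OF assms(1,2,4)]
  define F where "F x = rep (snd G (pclass ?T (Inl (usrc P x), [Inr (Inl x)])))" for x
  note gen = prof_morph_on_generators[OF assms(1-4) G F_def]
  have GF: "is_functor (sem ?T) (sem ?T') G" using G by (simp add: prof_morph_def sem_unc_simps)
  note Gob = prof_morph_sem_unc_Sorts[OF G]
  have pm: "catpres_premorph ?T ?T' (\<lambda>s. s) (totF C D F)"
    using gen by (simp add: catpres_premorph_def tot_simps)
  note realized = pm GF Gob gen(1)
  have "unc_morph C D P P' F"
    unfolding unc_morph_def
  proof (intro conjI ballI)
    fix x assume "x \<in> UFuns P"
    then have "Inr (Inl x) \<in> Funs ?T" by (simp add: tot_simps)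
    from gen(2-4)[OF this]
    show "cross_path C D P' (F x)" "fst (F x) = Inl (usrc P x)" "path_end ?T' (F x) = Inr (utgt P x)"
      by (simp_all add: cross_path_def tot_simps totF_def)
  qed (rule catpres_morph_if_functor[OF vT vT' realized])
  moreover have "fun_eq_on (pcat (sem_unc C D P)) (sem_unc_morph C D P' F) G"
    unfolding fun_eq_on_def
  proof (intro conjI ballI)
    fix a assume "a \<in> Ar (pcat (sem_unc C D P))"
    then obtain p where "is_path ?T p" "a = pclass ?T p" by (auto elim: sem_ArE simp: sem_unc_simps)
    then show "snd (sem_unc_morph C D P' F) a = snd G a"
      using sem_unc_morph_pclass[OF assms(1-4) calculation] functor_pclass_apply_path[OF vT vT' realized]
      by simp
  qed (use Gob in \<open>simp add: sem_unc_simps sem_unc_morph_def sem_morph_def\<close>)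
  ultimately show ?thesis by blast
qed

lemma inv_into_prof_morph:
  assumes P: "is_profunctor CC DD P" and G: "prof_morph CC DD P P' G"
    and bo: "bij_betw (fst G) (Ob (pcat P)) (Ob (pcat P'))"
    and ba: "bij_betw (snd G) (Ar (pcat P)) (Ar (pcat P'))"
  shows "prof_morph CC DD P' P (inv_into (Ob (pcat P)) (fst G), inv_into (Ar (pcat P)) (snd G))"
proof -
  let ?Ho = "inv_into (Ob (pcat P)) (fst G)" and ?Ha = "inv_into (Ar (pcat P)) (snd G)"
  have cat: "is_category (pcat P)" and Gf: "is_functor (pcat P) (pcat P') G"
    using P G by (simp_all add: is_profunctor_def prof_morph_def)
  have in_P: "\<And>ob. ob \<in> Ob CC \<Longrightarrow> in0_ob P ob \<in> Ob (pcat P)"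
    "\<And>ob. ob \<in> Ob DD \<Longrightarrow> in1_ob P ob \<in> Ob (pcat P)"
    "\<And>a. a \<in> Ar CC \<Longrightarrow> in0_ar P a \<in> Ar (pcat P)"
    "\<And>a. a \<in> Ar DD \<Longrightarrow> in1_ar P a \<in> Ar (pcat P)"
    using P unfolding is_profunctor_def is_functor_def by auto
  have Gpo: "\<And>ob. ob \<in> Ob (pcat P) \<Longrightarrow> pi_ob P' (fst G ob) = pi_ob P ob"
    and Gpa: "\<And>a. a \<in> Ar (pcat P) \<Longrightarrow> pi_ar P' (snd G a) = pi_ar P a"
    and G0o: "\<And>ob. ob \<in> Ob CC \<Longrightarrow> fst G (in0_ob P ob) = in0_ob P' ob"
    and G0a: "\<And>a. a \<in> Ar CC \<Longrightarrow> snd G (in0_ar P a) = in0_ar P' a"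
    and G1o: "\<And>ob. ob \<in> Ob DD \<Longrightarrow> fst G (in1_ob P ob) = in1_ob P' ob"
    and G1a: "\<And>a. a \<in> Ar DD \<Longrightarrow> snd G (in1_ar P a) = in1_ar P' a"
    using G by (simp_all add: prof_morph_def)
  note Ho = bij_betw_inv_into_left[OF bo] bij_betw_inv_into_right[OF bo]
  note Ha = bij_betw_inv_into_left[OF ba] bij_betw_inv_into_right[OF ba]
  have Hin: "?Ho ob \<in> Ob (pcat P)" if "ob \<in> Ob (pcat P')" for ob
    using that bo by (simp add: bij_betw_def inv_into_into)
  have Hina: "?Ha a \<in> Ar (pcat P)" if "a \<in> Ar (pcat P')" for a
    using that ba by (simp add: bij_betw_def inv_into_into)
  show ?thesis
    unfolding prof_morph_def
  proof (intro conjI ballI)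
    show "is_functor (pcat P') (pcat P) (?Ho, ?Ha)" by (rule inv_into_functor[OF cat Gf bo ba])
  next
    fix ob assume "ob \<in> Ob (pcat P')"
    then show "pi_ob P (fst (?Ho, ?Ha) ob) = pi_ob P' ob" using Gpo[OF Hin] Ho(2) by simp
  next
    fix a assume "a \<in> Ar (pcat P')"
    then show "pi_ar P (snd (?Ho, ?Ha) a) = pi_ar P' a" using Gpa[OF Hina] Ha(2) by simp
  next
    fix ob assume "ob \<in> Ob CC"
    then show "fst (?Ho, ?Ha) (in0_ob P' ob) = in0_ob P ob" using G0o[symmetric] Ho(1) in_P(1) by simp
  next
    fix ob assume "ob \<in> Ob DD"
    then show "fst (?Ho, ?Ha) (in1_ob P' ob) = in1_ob P ob" using G1o[symmetric] Ho(1) in_P(2) by simp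
  next
    fix a assume "a \<in> Ar CC"
    then show "snd (?Ho, ?Ha) (in0_ar P' a) = in0_ar P a" using G0a[symmetric] Ha(1) in_P(3) by simp
  next
    fix a assume "a \<in> Ar DD"
    then show "snd (?Ho, ?Ha) (in1_ar P' a) = in1_ar P a" using G1a[symmetric] Ha(1) in_P(4) by simp
  qed
qed

lemma prof_iso_if_bij:
  assumes "is_profunctor CC DD P" "prof_morph CC DD P P' G"
    and bo: "bij_betw (fst G) (Ob (pcat P)) (Ob (pcat P'))"
    and ba: "bij_betw (snd G) (Ar (pcat P)) (Ar (pcat P'))"
  shows "prof_iso CC DD P P'"
proof -
  let ?H = "(inv_into (Ob (pcat P)) (fst G), inv_into (Ar (pcat P)) (snd G))"
  have "fun_eq_on (pcat P) (fun_comp ?H G) (\<lambda>ob. ob, \<lambda>a. a)"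
    "fun_eq_on (pcat P') (fun_comp G ?H) (\<lambda>ob. ob, \<lambda>a. a)"
    using bij_betw_inv_into_left[OF bo] bij_betw_inv_into_right[OF bo]
      bij_betw_inv_into_left[OF ba] bij_betw_inv_into_right[OF ba]
    by (simp_all add: fun_eq_on_def fun_comp_def)
  then show ?thesis
    unfolding prof_iso_def using assms(2) inv_into_prof_morph[OF assms] by blast
qed

section \<open>Essential surjectivity\<close>

locale presented_profunctor =
  fixes C :: "('c, 'cf) catpres" and D :: "('d, 'df) catpres"
    and Q :: "('c, ('c \<times> 'cf list) set, 'd, ('d \<times> 'df list) set, 'o, 'a) profunctor"
  assumes vC: "valid_catpres C" and vD: "valid_catpres D" and Q: "is_profunctor (sem C) (sem D) Q"
begin

abbreviation "K \<equiv> pcat Q"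

lemma Q_facts: "is_category K" "is_functor K cat_two (pi_ob Q, pi_ar Q)"
  "is_functor (sem C) K (in0_ob Q, in0_ar Q)" "is_functor (sem D) K (in1_ob Q, in1_ar Q)"
  "inj_on (in0_ob Q) (Sorts C)" "inj_on (in0_ar Q) (Ar (sem C))"
  "in0_ob Q ` Sorts C = {ob \<in> Ob K. pi_ob Q ob = False}"
  "in0_ar Q ` Ar (sem C) = {a \<in> Ar K. pi_ar Q a = (False, False)}"
  "inj_on (in1_ob Q) (Sorts D)" "inj_on (in1_ar Q) (Ar (sem D))"
  "in1_ob Q ` Sorts D = {ob \<in> Ob K. pi_ob Q ob = True}"
  "in1_ar Q ` Ar (sem D) = {a \<in> Ar K. pi_ar Q a = (True, True)}"
  using Q unfolding is_profunctor_def sem_Ob by simp_all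

lemmas pi_ar_Q = functor_cat_two_ar[OF Q_facts(2)]

definition Q_gens :: "('c, 'd, 'cf, 'df, 'a) uncpres" where
  "Q_gens = \<lparr>UFuns = {a \<in> Ar K. pi_ar Q a = (False, True)},
             usrc = (\<lambda>a. inv_into (Sorts C) (in0_ob Q) (Dom K a)),
             utgt = (\<lambda>a. inv_into (Sorts D) (in1_ob Q) (Cod K a)),
             UEqs = {}\<rparr>"

definition qob :: "'c + 'd \<Rightarrow> 'o" where
  "qob = case_sum (in0_ob Q) (in1_ob Q)"

definition qsym :: "'cf + 'a + 'df \<Rightarrow> 'a" where
  "qsym = case_sum (\<lambda>f. in0_ar Q (pclass C (fsrc C f, [f])))
            (case_sum (\<lambda>x. x) (\<lambda>g. in1_ar Q (pclass D (fsrc D g, [g]))))"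

definition interp :: "('c + 'd) \<times> ('cf + 'a + 'df) list \<Rightarrow> 'a" where
  "interp = path_interp (tot C D Q_gens) K qob qsym"

definition Q_pres :: "('c, 'd, 'cf, 'df, 'a) uncpres" where
  "Q_pres = Q_gens\<lparr>UEqs := {(p, q). cross_path C D Q_gens p \<and> cross_path C D Q_gens q \<and>
                                  parallel (tot C D Q_gens) p q \<and> interp p = interp q}\<rparr>"

abbreviation "T \<equiv> tot C D Q_pres"

lemma T_fields: "Sorts T = Sorts (tot C D Q_gens)" "Funs T = Funs (tot C D Q_gens)"
  "fsrc T = fsrc (tot C D Q_gens)" "ftgt T = ftgt (tot C D Q_gens)"
  by (simp_all add: tot_def Q_pres_def Q_gens_def)

lemma T_paths: "is_path T = is_path (tot C D Q_gens)" "path_end T = path_end (tot C D Q_gens)"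
  by (simp_all add: fun_eq_iff is_path_def path_end_def T_fields)

lemma path_interp_T: "path_interp T K qob qsym = interp"
  by (simp add: fun_eq_iff interp_def path_interp_def T_paths)

lemma Q_pres_simps:
  "UFuns Q_pres = {a \<in> Ar K. pi_ar Q a = (False, True)}"
  "usrc Q_pres = (\<lambda>a. inv_into (Sorts C) (in0_ob Q) (Dom K a))"
  "utgt Q_pres = (\<lambda>a. inv_into (Sorts D) (in1_ob Q) (Cod K a))"
  by (simp_all add: Q_pres_def Q_gens_def)

lemma Q_pres_UEqs:
  "UEqs Q_pres = {(p, q). cross_path C D Q_pres p \<and> cross_path C D Q_pres q \<and>
                         parallel T p q \<and> interp p = interp q}"
proof -
  have "cross_path C D Q_pres = cross_path C D Q_gens" "parallel T = parallel (tot C D Q_gens)"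
    by (simp_all add: fun_eq_iff cross_path_def parallel_def T_paths)
  then show ?thesis by (simp add: Q_pres_def)
qed

lemma het_symbol:
  assumes "x \<in> UFuns Q_pres"
  shows "x \<in> Ar K" "usrc Q_pres x \<in> Sorts C" "utgt Q_pres x \<in> Sorts D"
    "in0_ob Q (usrc Q_pres x) = Dom K x" "in1_ob Q (utgt Q_pres x) = Cod K x"
proof -
  have x: "x \<in> Ar K" "pi_ar Q x = (False, True)" using assms by (auto simp: Q_pres_simps)
  then have "Dom K x \<in> in0_ob Q ` Sorts C" "Cod K x \<in> in1_ob Q ` Sorts D"
    using Q_facts(7,11) is_categoryD(1,2)[OF Q_facts(1)] pi_ar_Q(1) by auto
  then show "x \<in> Ar K" "usrc Q_pres x \<in> Sorts C" "utgt Q_pres x \<in> Sorts D"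
    "in0_ob Q (usrc Q_pres x) = Dom K x" "in1_ob Q (utgt Q_pres x) = Cod K x"
    using x(1) by (auto simp: Q_pres_simps intro: inv_into_into f_inv_into_f)
qed

lemma valid_Q_pres: "valid_unc C D Q_pres"
  unfolding valid_unc_def using het_symbol by (auto simp: Q_pres_UEqs)

lemma valid_T: "valid_catpres T"
  by (rule valid_tot[OF vC vD valid_Q_pres])

lemma qob_simps [simp]: "qob (Inl c) = in0_ob Q c" "qob (Inr d) = in1_ob Q d"
  by (simp_all add: qob_def)

lemma qsym_het [simp]: "qsym (Inr (Inl x)) = x"
  by (simp add: qsym_def)

lemma qob_pi: "s \<in> Sorts T \<Longrightarrow> qob s \<in> Ob K \<and> pi_ob Q (qob s) = (\<not> isl s)"
  using Q_facts(7,11) by (auto simp: tot_simps)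

lemma bij_betw_qob: "bij_betw qob (Sorts T) (Ob K)"
proof -
  have "inj_on qob (Sorts T)"
  proof (rule inj_onI)
    fix s t assume st: "s \<in> Sorts T" "t \<in> Sorts T" "qob s = qob t"
    from qob_pi[OF st(1)] qob_pi[OF st(2)] st(3) have "isl s = isl t" by simp
    with st show "s = t"
      using inj_on_eq_iff[OF Q_facts(5)] inj_on_eq_iff[OF Q_facts(9)]
      by (cases s; cases t) (auto simp: tot_simps)
  qed
  moreover have "qob ` Sorts T = Ob K"
    using Q_facts(7,11) by (auto simp: tot_simps image_Un image_image)
  ultimately show ?thesis by (simp add: bij_betw_def)
qed

lemma is_interp_qsym: "is_interp T K qob qsym"
proof -
  have "qsym f \<in> Ar K \<and> Dom K (qsym f) = qob (fsrc T f) \<and> Cod K (qsym f) = qob (ftgt T f)"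
    if "f \<in> Funs T" for f
    using that
  proof (cases rule: tot_Funs_cases)
    case (C a)
    note r = is_path_single[OF vC C(2)]
    show ?thesis using is_functorD(2-4)[OF Q_facts(3) pclass_in_sem_Ar[OF r]] sem_Dom_Cod[OF vC r] C
      by (simp add: qsym_def tot_simps)
  next
    case (D g)
    note r = is_path_single[OF vD D(2)]
    show ?thesis using is_functorD(2-4)[OF Q_facts(4) pclass_in_sem_Ar[OF r]] sem_Dom_Cod[OF vD r] D
      by (simp add: qsym_def tot_simps)
  next
    case (P x)
    then show ?thesis using het_symbol[OF P(2)] by (simp add: tot_simps)
  qed
  then show ?thesis using qob_pi by (simp add: is_interp_def)
qed

lemma interp_embC: "is_path C r \<Longrightarrow> interp (embC r) = in0_ar Q (pclass C r)"
  unfolding path_interp_T[symmetric] path_interp_embC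
  using functor_pclass_path_interp[OF vC Q_facts(3)] by (simp add: qsym_def)

lemma interp_embD: "is_path D r \<Longrightarrow> interp (embD r) = in1_ar Q (pclass D r)"
  unfolding path_interp_T[symmetric] path_interp_embD
  using functor_pclass_path_interp[OF vD Q_facts(4)] by (simp add: qsym_def)

lemma is_model_qsym: "is_model T K qob qsym"
  unfolding is_model_def
proof (intro conjI is_interp_qsym ballI, clarify)
  fix p q assume "(p, q) \<in> Eqs T"
  then consider (C) r r' where "(r, r') \<in> Eqs C" "p = embC r" "q = embC r'"
    | (P) "(p, q) \<in> UEqs Q_pres" | (D) r r' where "(r, r') \<in> Eqs D" "p = embD r" "q = embD r'"
    unfolding tot_Eqs by auto
  then show "path_interp T K qob qsym p = path_interp T K qob qsym q"
  proof cases
    case C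
    then have r: "is_path C r" "is_path C r'" using vC by (auto simp: valid_catpres_def)
    then have "pclass C r = pclass C r'" using pclass_eq_iff peq_ax[OF C(1)] by blast
    then show ?thesis using C interp_embC r by (simp add: path_interp_T)
  next
    case D
    then have r: "is_path D r" "is_path D r'" using vD by (auto simp: valid_catpres_def)
    then have "pclass D r = pclass D r'" using pclass_eq_iff peq_ax[OF D(1)] by blast
    then show ?thesis using D interp_embD r by (simp add: path_interp_T)
  qed (simp add: path_interp_T Q_pres_UEqs)
qed

definition to_Q :: "('c + 'd \<Rightarrow> 'o) \<times> ((('c + 'd) \<times> ('cf + 'a + 'df) list) set \<Rightarrow> 'a)" where
  "to_Q = sem_lift T K qob qsym"

lemma to_Q_pclass: "is_path T p \<Longrightarrow> snd to_Q (pclass T p) = interp p"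
  using sem_lift_pclass[OF valid_T Q_facts(1) is_model_qsym] by (simp add: to_Q_def path_interp_T)

lemma interp_typed:
  "is_path T p \<Longrightarrow> interp p \<in> Ar K \<and> Dom K (interp p) = qob (fst p) \<and> Cod K (interp p) = qob (path_end T p)"
  using path_interp_typed[OF valid_T Q_facts(1) is_interp_qsym] by (simp add: path_interp_T)

lemma pi_ar_interp:
  assumes "is_path T p"
  shows "pi_ar Q (interp p) = (\<not> isl (fst p), \<not> isl (path_end T p))"
  using pi_ar_Q(1) interp_typed[OF assms] qob_pi path_end_in_Sorts[OF valid_T assms] assms
  by (simp add: is_path_def)

lemma to_Q_prof_morph: "prof_morph (sem C) (sem D) (sem_unc C D Q_pres) Q to_Q"
  unfolding prof_morph_def sem_unc_simps
proof (intro conjI ballI)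
  show "is_functor (sem T) K to_Q"
    unfolding to_Q_def by (rule sem_lift_functor[OF valid_T Q_facts(1) is_model_qsym])
next
  fix a assume "a \<in> Ar (sem T)"
  then obtain p where p: "is_path T p" "a = pclass T p" by (rule sem_ArE)
  then show "pi_ar Q (snd to_Q a) = (\<not> isl (Dom (sem T) a), \<not> isl (Cod (sem T) a))"
    using to_Q_pclass[OF p(1)] pi_ar_interp[OF p(1)] sem_Dom_Cod[OF valid_T p(1)] by simp
next
  fix a assume "a \<in> Ar (sem C)"
  then obtain r where r: "is_path C r" "a = pclass C r" by (rule sem_ArE)
  have "is_path T (embC r)" using r(1) by (simp add: embC_simps)
  then show "snd to_Q (in0_ar (sem_unc C D Q_pres) a) = in0_ar Q a"
    using in0_ar_pclass[OF vC vD valid_Q_pres r(1)] to_Q_pclass interp_embC[OF r(1)] r(2) by simp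
next
  fix a assume "a \<in> Ar (sem D)"
  then obtain r where r: "is_path D r" "a = pclass D r" by (rule sem_ArE)
  have "is_path T (embD r)" using r(1) by (simp add: embD_simps)
  then show "snd to_Q (in1_ar (sem_unc C D Q_pres) a) = in1_ar Q a"
    using in1_ar_pclass[OF vC vD valid_Q_pres r(1)] to_Q_pclass interp_embD[OF r(1)] r(2) by simp
qed (use qob_pi in \<open>simp_all add: to_Q_def sem_lift_def\<close>)

lemma interp_eq_imp_peq:
  assumes p: "is_path T p" and q: "is_path T q" and eq: "interp p = interp q"
  shows "peq T p q"
proof -
  have sorts: "fst p \<in> Sorts T" "fst q \<in> Sorts T" "path_end T p \<in> Sorts T" "path_end T q \<in> Sorts T"
    using p q path_end_in_Sorts[OF valid_T] by (auto simp: is_path_def)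
  have "qob (fst p) = qob (fst q)" "qob (path_end T p) = qob (path_end T q)"
    using interp_typed[OF p] interp_typed[OF q] eq by simp_all
  moreover have inj: "inj_on qob (Sorts T)" using bij_betw_qob by (simp add: bij_betw_def)
  ultimately have same: "fst q = fst p" "path_end T q = path_end T p"
    using inj_on_eq_iff[OF inj sorts(1,2)] inj_on_eq_iff[OF inj sorts(3,4)] by simp_all
  show ?thesis
    using p
  proof (cases rule: tot_path_cases)
    case (C r)
    then have "isl (path_end T q)" using same by (simp add: embC_simps)
    then obtain r' where r': "is_path C r'" "q = embC r'" using tot_path_end_Inl q by blast
    have "in0_ar Q (pclass C r) = in0_ar Q (pclass C r')" using eq interp_embC C r' by simp
    then have "pclass C r = pclass C r'"
      by (rule inj_onD[OF Q_facts(6)]) (simp_all add: pclass_in_sem_Ar C r')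
    then show ?thesis using pclass_eq_iff peq_tot_embC_iff[OF vC vD valid_Q_pres] C r' by blast
  next
    case (D r)
    then have "\<not> isl (fst q)" using same by (simp add: embD_simps)
    then obtain r' where r': "is_path D r'" "q = embD r'" using tot_path_start_Inr q by blast
    have "in1_ar Q (pclass D r) = in1_ar Q (pclass D r')" using eq interp_embD D r' by simp
    then have "pclass D r = pclass D r'"
      by (rule inj_onD[OF Q_facts(10)]) (simp_all add: pclass_in_sem_Ar D r')
    then show ?thesis using pclass_eq_iff peq_tot_embD_iff[OF vC vD valid_Q_pres] D r' by blast
  next
    case cross
    then have "(p, q) \<in> UEqs Q_pres"
      using q same eq by (simp add: Q_pres_UEqs cross_path_def parallel_def)
    then show ?thesis by (intro peq_ax) (simp add: tot_Eqs)
  qed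
qed

lemma to_Q_inj: "inj_on (snd to_Q) (Ar (sem T))"
proof (rule inj_onI)
  fix X Y assume "X \<in> Ar (sem T)" "Y \<in> Ar (sem T)" and XY: "snd to_Q X = snd to_Q Y"
  then obtain p q where p: "is_path T p" "X = pclass T p" and q: "is_path T q" "Y = pclass T q"
    by (meson sem_ArE)
  then have "peq T p q" using XY to_Q_pclass interp_eq_imp_peq by simp
  then show "X = Y" using p q pclass_eq_iff by blast
qed

lemma interp_surj:
  assumes a: "a \<in> Ar K"
  obtains p where "is_path T p" "interp p = a"
proof -
  consider (C) "pi_ar Q a = (False, False)" | (D) "pi_ar Q a = (True, True)"
    | (het) "pi_ar Q a = (False, True)"
    using pi_ar_Q[OF a] by (cases "pi_ob Q (Dom K a)"; cases "pi_ob Q (Cod K a)") auto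
  then show thesis
  proof cases
    case C
    then have "a \<in> in0_ar Q ` Ar (sem C)" using a Q_facts(8) by blast
    then obtain X where X: "X \<in> Ar (sem C)" "a = in0_ar Q X" by blast
    from X(1) obtain r where r: "is_path C r" "X = pclass C r" by (rule sem_ArE)
    show thesis using that[of "embC r"] interp_embC r X(2) by (simp add: embC_simps)
  next
    case D
    then have "a \<in> in1_ar Q ` Ar (sem D)" using a Q_facts(12) by blast
    then obtain X where X: "X \<in> Ar (sem D)" "a = in1_ar Q X" by blast
    from X(1) obtain r where r: "is_path D r" "X = pclass D r" by (rule sem_ArE)
    show thesis using that[of "embD r"] interp_embD r X(2) by (simp add: embD_simps)
  next
    case het
    then have f: "Inr (Inl a) \<in> Funs T" using a by (simp add: tot_simps Q_pres_simps)
    show thesis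
      using that[OF is_path_single[OF valid_T f]] path_interp_single[OF Q_facts(1) is_interp_qsym f]
      by (simp add: path_interp_T)
  qed
qed

lemma to_Q_surj: "snd to_Q ` Ar (sem T) = Ar K"
proof
  show "snd to_Q ` Ar (sem T) \<subseteq> Ar K"
    using is_functorD(2)[OF sem_lift_functor[OF valid_T Q_facts(1) is_model_qsym]] by (auto simp: to_Q_def)
  show "Ar K \<subseteq> snd to_Q ` Ar (sem T)"
  proof
    fix a assume "a \<in> Ar K"
    then obtain p where "is_path T p" "interp p = a" by (rule interp_surj)
    then show "a \<in> snd to_Q ` Ar (sem T)" using to_Q_pclass pclass_in_sem_Ar by (metis image_eqI)
  qed
qed

theorem essentially_surjective:
  "\<exists>P :: ('c, 'd, 'cf, 'df, 'a) uncpres. valid_unc C D P \<and> prof_iso (sem C) (sem D) (sem_unc C D P) Q"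
proof (intro exI conjI)
  show "valid_unc C D Q_pres" by (rule valid_Q_pres)
  have "bij_betw (fst to_Q) (Ob (pcat (sem_unc C D Q_pres))) (Ob K)"
    using bij_betw_qob by (simp add: to_Q_def sem_lift_def sem_unc_simps)
  moreover have "bij_betw (snd to_Q) (Ar (pcat (sem_unc C D Q_pres))) (Ar K)"
    using to_Q_inj to_Q_surj by (simp add: bij_betw_def sem_unc_simps)
  ultimately show "prof_iso (sem C) (sem D) (sem_unc C D Q_pres) Q"
    by (rule prof_iso_if_bij[OF sem_unc_is_profunctor[OF vC vD valid_Q_pres] to_Q_prof_morph])
qed

end

lemma sem_unc_essentially_surjective:
  fixes Q :: "('c, ('c \<times> 'cf list) set, 'd, ('d \<times> 'df list) set, 'o, 'a) profunctor"
  assumes "valid_catpres C" "valid_catpres D" "is_profunctor (sem C) (sem D) Q"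
  shows "\<exists>P :: ('c, 'd, 'cf, 'df, 'a) uncpres. valid_unc C D P \<and> prof_iso (sem C) (sem D) (sem_unc C D P) Q"
  by (rule presented_profunctor.essentially_surjective[OF presented_profunctor.intro[OF assms]])

theorem mainTheorem4:
  fixes C :: "('c, 'cf) catpres" and D :: "('d, 'df) catpres"
  assumes "valid_catpres C" and "valid_catpres D"
  shows
    \<comment> \<open>[[P]] is a profunctor [[C]] -/-> [[D]]\<close>
    "(\<forall>P :: ('c, 'd, 'cf, 'df, 'x) uncpres. valid_unc C D P \<longrightarrow>
        is_profunctor (sem C) (sem D) (sem_unc C D P)) \<and>
    \<comment> \<open>[[F]] is a morphism of profunctors\<close>
     (\<forall>(P :: ('c, 'd, 'cf, 'df, 'x) uncpres) (P' :: ('c, 'd, 'cf, 'df, 'y) uncpres) F.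
        valid_unc C D P \<and> valid_unc C D P' \<and> unc_morph C D P P' F \<longrightarrow>
        prof_morph (sem C) (sem D) (sem_unc C D P) (sem_unc C D P') (sem_unc_morph C D P' F)) \<and>
    \<comment> \<open>[[-]] is well defined on UnCurr_\<approx>(C, D)\<close>
     (\<forall>(P :: ('c, 'd, 'cf, 'df, 'x) uncpres) (P' :: ('c, 'd, 'cf, 'df, 'y) uncpres) F F'.
        valid_unc C D P \<and> valid_unc C D P' \<and> unc_morph C D P P' F \<and> unc_morph C D P P' F' \<and>
        unc_equiv C D P P' F F' \<longrightarrow>
        fun_eq_on (pcat (sem_unc C D P)) (sem_unc_morph C D P' F) (sem_unc_morph C D P' F')) \<and>
    \<comment> \<open>[[-]] preserves identities\<close>
     (\<forall>P :: ('c, 'd, 'cf, 'df, 'x) uncpres. valid_unc C D P \<longrightarrow>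
        fun_eq_on (pcat (sem_unc C D P)) (sem_unc_morph C D P (unc_id P)) (\<lambda>ob. ob, \<lambda>a. a)) \<and>
    \<comment> \<open>[[-]] preserves composition\<close>
     (\<forall>(P :: ('c, 'd, 'cf, 'df, 'x) uncpres) (P' :: ('c, 'd, 'cf, 'df, 'y) uncpres)
        (P'' :: ('c, 'd, 'cf, 'df, 'z) uncpres) F G.
        valid_unc C D P \<and> valid_unc C D P' \<and> valid_unc C D P'' \<and>
        unc_morph C D P P' F \<and> unc_morph C D P' P'' G \<longrightarrow>
        fun_eq_on (pcat (sem_unc C D P)) (sem_unc_morph C D P'' (unc_comp C D G F))
          (fun_comp (sem_unc_morph C D P'' G) (sem_unc_morph C D P' F))) \<and>
    \<comment> \<open>faithful\<close>
     (\<forall>(P :: ('c, 'd, 'cf, 'df, 'x) uncpres) (P' :: ('c, 'd, 'cf, 'df, 'y) uncpres) F F'.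
        valid_unc C D P \<and> valid_unc C D P' \<and> unc_morph C D P P' F \<and> unc_morph C D P P' F' \<and>
        fun_eq_on (pcat (sem_unc C D P)) (sem_unc_morph C D P' F) (sem_unc_morph C D P' F') \<longrightarrow>
        unc_equiv C D P P' F F') \<and>
    \<comment> \<open>full\<close>
     (\<forall>(P :: ('c, 'd, 'cf, 'df, 'x) uncpres) (P' :: ('c, 'd, 'cf, 'df, 'y) uncpres) G.
        valid_unc C D P \<and> valid_unc C D P' \<and>
        prof_morph (sem C) (sem D) (sem_unc C D P) (sem_unc C D P') G \<longrightarrow>
        (\<exists>F. unc_morph C D P P' F \<and>
             fun_eq_on (pcat (sem_unc C D P)) (sem_unc_morph C D P' F) G)) \<and>
    \<comment> \<open>essentially surjective\<close>
     (\<forall>Q :: ('c, ('c \<times> 'cf list) set, 'd, ('d \<times> 'df list) set, 'o, 'a) profunctor.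
        is_profunctor (sem C) (sem D) Q \<longrightarrow>
        (\<exists>P :: ('c, 'd, 'cf, 'df, 'a) uncpres. valid_unc C D P \<and>
           prof_iso (sem C) (sem D) (sem_unc C D P) Q))"
proof (intro conjI allI impI; (elim conjE)?)
qed (blast intro: sem_unc_is_profunctor[OF assms] sem_unc_morph_prof_morph[OF assms]
    sem_unc_morph_cong[OF assms] sem_unc_morph_id[OF assms] sem_unc_morph_comp[OF assms]
    sem_unc_morph_faithful[OF assms] sem_unc_morph_full[OF assms]
    sem_unc_essentially_surjective[OF assms])+

end
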